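(* Let $f:(R,\mathfrak{m})\to(S,\mathfrak{n})$ be a flat homomorphism of finite length of Noetherian local rings. Let $\varphi$ be a self-map of finite length of $R$, and let $\psi$ be a ring endomorphism of $S$ with $\psi\circ f=f\circ\varphi$. Then $\psi$ is a self-map of finite length of $S$ and $h_{\mathrm{alg}}(\varphi,R)=h_{\mathrm{alg}}(\psi,S)$.
   Context: A homomorphism $g:(A,\mathfrak{a})\to(B,\mathfrak{b})$ of Noetherian local rings is of finite length if it is local and $g(\mathfrak{a})B$ is $\mathfrak{b}$-primary; its length is $\lambda(g):=\ell_B(B/g(\mathfrak{a})B)$. A self-map of finite length is an endomorphism that is of finite length; its iterates are then of finite length. The algebraic entropy of a self-map of finite length $\varphi$ of $R$ is $h_{\mathrm{alg}}(\varphi,R):=\lim_{n\to\infty}\frac1n\log\lambda(\varphi^n)$ (the limit exists). *)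

theory Defs
  imports "HOL-Algebra.Algebra" "HOL-Library.Extended_Nat"
begin

definition noetherian_ring :: "('a, 'm) ring_scheme \<Rightarrow> bool" where
  "noetherian_ring R \<longleftrightarrow> cring R \<and>
     (\<forall>I. ideal I R \<longrightarrow> (\<exists>G. finite G \<and> G \<subseteq> carrier R \<and> I = genideal R G))"

definition local_ring :: "('a, 'm) ring_scheme \<Rightarrow> bool" where
  "local_ring R \<longleftrightarrow> cring R \<and> (\<exists>!m. maximalideal m R)"

definition noeth_local_ring :: "('a, 'm) ring_scheme \<Rightarrow> bool" where
  "noeth_local_ring R \<longleftrightarrow> noetherian_ring R \<and> local_ring R"

definition max_ideal :: "('a, 'm) ring_scheme \<Rightarrow> 'a set" where
  "max_ideal R = (THE m. maximalideal m R)"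

definition radical_ideal :: "('a, 'm) ring_scheme \<Rightarrow> 'a set \<Rightarrow> 'a set" where
  "radical_ideal R I = {x \<in> carrier R. \<exists>n::nat. x [^]\<^bsub>R\<^esub> n \<in> I}"

definition primary_ideal :: "('a, 'm) ring_scheme \<Rightarrow> 'a set \<Rightarrow> bool" where
  "primary_ideal R q \<longleftrightarrow> ideal q R \<and> q \<noteq> carrier R \<and>
     (\<forall>x\<in>carrier R. \<forall>y\<in>carrier R. x \<otimes>\<^bsub>R\<^esub> y \<in> q \<longrightarrow>
        x \<in> q \<or> (\<exists>n::nat. y [^]\<^bsub>R\<^esub> n \<in> q))"

definition is_primary_for :: "('a, 'm) ring_scheme \<Rightarrow> 'a set \<Rightarrow> 'a set \<Rightarrow> bool" where
  "is_primary_for R P q \<longleftrightarrow> primary_ideal R q \<and> radical_ideal R q = P"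

text \<open>Submodules of \<open>B/I\<close> correspond to ideals of \<open>B\<close> containing \<open>I\<close>; the length of
  \<open>B/I\<close> is the supremum of the lengths of strict chains of such submodules.\<close>
definition quot_length :: "('a, 'm) ring_scheme \<Rightarrow> 'a set \<Rightarrow> enat" where
  "quot_length B I = Sup {enat n | n. \<exists>J :: nat \<Rightarrow> 'a set.
       (\<forall>i\<le>n. ideal (J i) B \<and> I \<subseteq> J i) \<and> (\<forall>i<n. J i \<subset> J (Suc i))}"

definition finite_length_hom ::
  "('a, 'm) ring_scheme \<Rightarrow> ('b, 'n) ring_scheme \<Rightarrow> ('a \<Rightarrow> 'b) \<Rightarrow> bool" where
  "finite_length_hom A B g \<longleftrightarrow> g \<in> ring_hom A B \<and>
     g ` max_ideal A \<subseteq> max_ideal B \<and>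
     is_primary_for B (max_ideal B) (genideal B (g ` max_ideal A))"

text \<open>\<open>\<lambda>(g) = \<ell>_B(B / g(\<aa>)B)\<close> (a natural number when \<open>g\<close> has finite length).\<close>
definition hom_length ::
  "('a, 'm) ring_scheme \<Rightarrow> ('b, 'n) ring_scheme \<Rightarrow> ('a \<Rightarrow> 'b) \<Rightarrow> nat" where
  "hom_length A B g = the_enat (quot_length B (genideal B (g ` max_ideal A)))"

definition finite_length_selfmap :: "('a, 'm) ring_scheme \<Rightarrow> ('a \<Rightarrow> 'a) \<Rightarrow> bool" where
  "finite_length_selfmap R \<phi> \<longleftrightarrow> finite_length_hom R R \<phi>"

definition alg_entropy :: "('a, 'm) ring_scheme \<Rightarrow> ('a \<Rightarrow> 'a) \<Rightarrow> real" where
  "alg_entropy R \<phi> = lim (\<lambda>n. ln (real (hom_length R R (\<phi> ^^ n))) / real n)"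

text \<open>\<open>S\<close> is flat as an \<open>R\<close>-module via \<open>f\<close>, expressed by the equational criterion
  of flatness: every relation \<open>\<Sum> f(r_i) x_i = 0\<close> is trivial.\<close>
definition flat_hom ::
  "('a, 'm) ring_scheme \<Rightarrow> ('b, 'n) ring_scheme \<Rightarrow> ('a \<Rightarrow> 'b) \<Rightarrow> bool" where
  "flat_hom R S f \<longleftrightarrow>
     (\<forall>(k::nat) (r::nat \<Rightarrow> 'a) (x::nat \<Rightarrow> 'b).
        r ` {..<k} \<subseteq> carrier R \<longrightarrow> x ` {..<k} \<subseteq> carrier S \<longrightarrow>
        finsum S (\<lambda>i. f (r i) \<otimes>\<^bsub>S\<^esub> x i) {..<k} = \<zero>\<^bsub>S\<^esub> \<longrightarrow>
        (\<exists>(l::nat) (a::nat \<Rightarrow> nat \<Rightarrow> 'a) (y::nat \<Rightarrow> 'b).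
           y ` {..<l} \<subseteq> carrier S \<and>
           (\<forall>i<k. \<forall>j<l. a i j \<in> carrier R) \<and>
           (\<forall>i<k. x i = finsum S (\<lambda>j. f (a i j) \<otimes>\<^bsub>S\<^esub> y j) {..<l}) \<and>
           (\<forall>j<l. finsum R (\<lambda>i. r i \<otimes>\<^bsub>R\<^esub> a i j) {..<k} = \<zero>\<^bsub>R\<^esub>)))"

end

theory Submission
  imports Defs
begin

text \<open>Write \<open>a\<^sub>n = \<lambda>(\<phi>\<^sup>n)\<close>, \<open>b\<^sub>n = \<lambda>(\<psi>\<^sup>n)\<close> and \<open>c = \<lambda>(f)\<close>. For a local homomorphism
  \<open>g : A \<rightarrow> B\<close> and an ideal \<open>I\<close> of finite colength, \<open>\<l>(B/IB) \<le> \<l>(A/I) \<cdot> \<lambda>(g)\<close>, by peeling off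
  socle elements of \<open>A/I\<close> one at a time; if \<open>g\<close> is moreover flat, it is faithfully flat, so extension
  of ideals preserves strict inclusions and \<open>\<l>(A/I) \<le> \<l>(B/IB)\<close>. Since \<open>\<psi>\<^sup>n \<circ> f = f \<circ> \<phi>\<^sup>n\<close>,
  the extension along \<open>f\<close> of \<open>\<phi>\<^sup>n(m\<^sub>R)R\<close> equals the extension along \<open>\<psi>\<^sup>n\<close> of
  \<open>f(m\<^sub>R)S\<close>, and comparing colengths gives \<open>b\<^sub>n \<le> c a\<^sub>n\<close> and \<open>a\<^sub>n \<le> c b\<^sub>n\<close>; the first bound
  for \<open>n = 1\<close> shows that \<open>\<psi>\<close> has finite length. The first estimate applied to \<open>\<phi>\<^sup>p\<close> also makes
  \<open>a\<^sub>n\<close> submultiplicative, so \<open>(log a\<^sub>n)/n\<close> converges by Fekete's lemma, and \<open>log b\<^sub>n\<close> differs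
  from \<open>log a\<^sub>n\<close> by at most \<open>log c\<close>.\<close>

lemma ideal_subset_carrier: "ideal I R \<Longrightarrow> I \<subseteq> carrier R"
  by (meson ideal.Icarr subsetI)

lemma (in cring) cring_idealI:
  assumes sub: "I \<subseteq> carrier R" and zero: "\<zero> \<in> I"
    and add: "\<And>a b. a \<in> I \<Longrightarrow> b \<in> I \<Longrightarrow> a \<oplus> b \<in> I"
    and mult: "\<And>a x. a \<in> I \<Longrightarrow> x \<in> carrier R \<Longrightarrow> x \<otimes> a \<in> I"
  shows "ideal I R"
proof (rule idealI)
  show "subgroup I (add_monoid R)"
  proof (rule add.subgroupI)
    fix a assume a: "a \<in> I"
    have "\<ominus> a = (\<ominus> \<one>) \<otimes> a" using a sub by (simp add: subsetD l_minus)
    then show "\<ominus> a \<in> I" using mult[OF a] by simp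
  qed (use sub zero add in blast)+
  fix a x assume a: "a \<in> I" and x: "x \<in> carrier R"
  show "x \<otimes> a \<in> I" using a x by (rule mult)
  then show "a \<otimes> x \<in> I" using a x sub m_comm by (simp add: subsetD)
qed (rule ring_axioms)

subsection \<open>Ideal quotients and adjoining one generator\<close>

definition ideal_quotient :: "('a, 'm) ring_scheme \<Rightarrow> 'a set \<Rightarrow> 'a \<Rightarrow> 'a set" where
  "ideal_quotient R K y = {a \<in> carrier R. a \<otimes>\<^bsub>R\<^esub> y \<in> K}"

lemma (in cring) ideal_quotient_ideal:
  assumes K: "ideal K R" and y: "y \<in> carrier R"
  shows "ideal (ideal_quotient R K y) R"
  unfolding ideal_quotient_def
proof (rule cring_idealI)
  show "\<zero> \<in> {a \<in> carrier R. a \<otimes> y \<in> K}"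
    using y K by (simp add: additive_subgroup.zero_closed ideal.axioms(1))
  fix a b assume "a \<in> {a \<in> carrier R. a \<otimes> y \<in> K}" "b \<in> {a \<in> carrier R. a \<otimes> y \<in> K}"
  then show "a \<oplus> b \<in> {a \<in> carrier R. a \<otimes> y \<in> K}"
    using y K by (simp add: l_distr additive_subgroup.a_closed ideal.axioms(1))
next
  fix a x assume "a \<in> {a \<in> carrier R. a \<otimes> y \<in> K}" "x \<in> carrier R"
  then show "x \<otimes> a \<in> {a \<in> carrier R. a \<otimes> y \<in> K}"
    using y K by (simp add: m_assoc ideal.I_l_closed)
qed blast

lemma (in cring) subset_ideal_quotient:
  "ideal K R \<Longrightarrow> y \<in> carrier R \<Longrightarrow> K \<subseteq> ideal_quotient R K y"
  unfolding ideal_quotient_def using ideal.I_r_closed ideal_subset_carrier by fastforce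

lemma ideal_quotient_mono: "K \<subseteq> K' \<Longrightarrow> ideal_quotient R K y \<subseteq> ideal_quotient R K' y"
  unfolding ideal_quotient_def by auto

lemma (in cring) mem_add_PIdl_iff:
  "z \<in> K <+>\<^bsub>R\<^esub> PIdl y \<longleftrightarrow> (\<exists>k\<in>K. \<exists>b\<in>carrier R. z = k \<oplus> b \<otimes> y)"
  unfolding set_add_def' cgenideal_def by auto

lemma (in cring) add_PIdl_ideal: "ideal K R \<Longrightarrow> y \<in> carrier R \<Longrightarrow> ideal (K <+>\<^bsub>R\<^esub> PIdl y) R"
  by (simp add: add_ideals cgenideal_ideal)

lemma (in cring) subset_add_PIdl:
  assumes "ideal K R" "y \<in> carrier R"
  shows "K \<subseteq> K <+>\<^bsub>R\<^esub> PIdl y"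
proof
  fix k assume "k \<in> K"
  moreover from this have "k = k \<oplus> \<zero> \<otimes> y" using assms ideal_subset_carrier by fastforce
  ultimately show "k \<in> K <+>\<^bsub>R\<^esub> PIdl y" using mem_add_PIdl_iff by blast
qed

lemma (in cring) mem_add_PIdl:
  assumes "ideal K R" "y \<in> carrier R"
  shows "y \<in> K <+>\<^bsub>R\<^esub> PIdl y"
proof -
  have "y = \<zero> \<oplus> \<one> \<otimes> y" using assms by simp
  then show ?thesis using mem_add_PIdl_iff assms
    by (metis additive_subgroup.zero_closed ideal.axioms(1) one_closed)
qed

lemma (in ring) set_add_ideal_lub:
  assumes "ideal C R" "ideal J R"
  shows "ideal (C <+>\<^bsub>R\<^esub> J) R" "J \<subseteq> C <+>\<^bsub>R\<^esub> J" "C \<subseteq> C <+>\<^bsub>R\<^esub> J"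
    "ideal K R \<Longrightarrow> C \<subseteq> K \<Longrightarrow> J \<subseteq> K \<Longrightarrow> C <+>\<^bsub>R\<^esub> J \<subseteq> K"
  using add_ideals[OF assms] union_genideal[OF assms, symmetric] genideal_self[of "C \<union> J"]
    genideal_minimal[of K "C \<union> J"] assms ideal_subset_carrier[of C R] ideal_subset_carrier[of J R]
  by auto

lemma (in ring) ideal_eq_of_modular:
  assumes C: "ideal C R" and C': "ideal C' R" and J: "ideal J R" and "C \<subseteq> C'"
    and inter: "C \<inter> J = C' \<inter> J" and add: "C <+>\<^bsub>R\<^esub> J = C' <+>\<^bsub>R\<^esub> J"
  shows "C = C'"
proof
  show "C' \<subseteq> C"
  proof
    fix x assume x: "x \<in> C'"
    have "x \<in> C <+>\<^bsub>R\<^esub> J" using subsetD[OF set_add_ideal_lub(3)[OF C' J] x] unfolding add .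
    then obtain c j where cj: "c \<in> C" "j \<in> J" "x = c \<oplus> j"
      unfolding set_add_def' by blast
    have cc: "c \<in> carrier R" "j \<in> carrier R" using cj C J ideal_subset_carrier by blast+
    have "(\<ominus> c) \<oplus> (c \<oplus> j) = j" using cc by algebra
    then have "j = (\<ominus> c) \<oplus> x" using cj(3) by simp
    moreover have "\<ominus> c \<in> C'" using cj \<open>C \<subseteq> C'\<close> C'
      by (meson additive_subgroup.a_inv_closed ideal.axioms(1) subsetD)
    ultimately have "j \<in> C'" using x C' by (simp add: additive_subgroup.a_closed ideal.axioms(1))
    then have "j \<in> C" using cj inter by blast
    then show "x \<in> C" using cj C by (simp add: additive_subgroup.a_closed ideal.axioms(1))
  qed
qed fact

subsection \<open>Lengths of intervals of ideals\<close>

text \<open>\<open>ideal_length B I J\<close> is the length \<open>\<l>(J/I)\<close> of the \<open>B\<close>-module \<open>J/I\<close>.\<close>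

definition ideal_chain ::
  "('a, 'm) ring_scheme \<Rightarrow> 'a set \<Rightarrow> 'a set \<Rightarrow> nat \<Rightarrow> (nat \<Rightarrow> 'a set) \<Rightarrow> bool" where
  "ideal_chain B I J n C \<longleftrightarrow>
     (\<forall>i\<le>n. ideal (C i) B \<and> I \<subseteq> C i \<and> C i \<subseteq> J) \<and> (\<forall>i<n. C i \<subset> C (Suc i))"

definition ideal_length :: "('a, 'm) ring_scheme \<Rightarrow> 'a set \<Rightarrow> 'a set \<Rightarrow> enat" where
  "ideal_length B I J = Sup {enat n | n. \<exists>C. ideal_chain B I J n C}"

lemma quot_length_eq_ideal_length: "quot_length B I = ideal_length B I (carrier B)"
proof -
  have bounded: "(\<forall>i\<le>n. ideal (C i) B \<and> I \<subseteq> C i) \<longleftrightarrow>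
        (\<forall>i\<le>n. ideal (C i) B \<and> I \<subseteq> C i \<and> C i \<subseteq> carrier B)" for n C
    using ideal_subset_carrier by blast
  show ?thesis unfolding quot_length_def ideal_length_def ideal_chain_def by (simp only: bounded)
qed

lemma ideal_chain_le_ideal_length: "ideal_chain B I J n C \<Longrightarrow> enat n \<le> ideal_length B I J"
  unfolding ideal_length_def by (rule Sup_upper) blast

lemma ideal_length_leI:
  "(\<And>n C. ideal_chain B I J n C \<Longrightarrow> enat n \<le> Z) \<Longrightarrow> ideal_length B I J \<le> Z"
  unfolding ideal_length_def by (rule Sup_least) blast

lemma ideal_length_le_of_strict_map:
  assumes "\<And>K. ideal K B \<Longrightarrow> I \<subseteq> K \<Longrightarrow> K \<subseteq> J \<Longrightarrow> ideal (h K) B' \<and> I' \<subseteq> h K \<and> h K \<subseteq> J'"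
    and "\<And>K K'. ideal K B \<Longrightarrow> I \<subseteq> K \<Longrightarrow> ideal K' B \<Longrightarrow> K' \<subseteq> J \<Longrightarrow> K \<subset> K' \<Longrightarrow> h K \<subset> h K'"
  shows "ideal_length B I J \<le> ideal_length B' I' J'"
proof (rule ideal_length_leI)
  fix n C assume "ideal_chain B I J n C"
  then have "ideal_chain B' I' J' n (h \<circ> C)"
    using assms unfolding ideal_chain_def by (auto simp: Suc_leI)
  then show "enat n \<le> ideal_length B' I' J'" by (rule ideal_chain_le_ideal_length)
qed

lemma ideal_length_mono:
  "I' \<subseteq> I \<Longrightarrow> J \<subseteq> J' \<Longrightarrow> ideal_length B I J \<le> ideal_length B I' J'"
  by (rule ideal_length_le_of_strict_map[where h = id]) auto

lemma ideal_chain_of_mono_seq: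
  assumes "\<forall>i\<le>n. ideal (a i) B \<and> I \<subseteq> a i \<and> a i \<subseteq> J" "\<forall>i<n. a i \<subseteq> a (Suc i)"
  shows "\<exists>C. ideal_chain B I J (card {i. i < n \<and> a i \<subset> a (Suc i)}) C \<and>
             C (card {i. i < n \<and> a i \<subset> a (Suc i)}) = a n"
  using assms
proof (induction n)
  case 0
  show ?case by (rule exI[of _ "\<lambda>_. a 0"]) (use 0 in \<open>auto simp: ideal_chain_def\<close>)
next
  case (Suc n)
  define s where "s = card {i. i < n \<and> a i \<subset> a (Suc i)}"
  obtain C where C: "ideal_chain B I J s C" "C s = a n"
    using Suc unfolding s_def by auto
  show ?case
  proof (cases "a n \<subset> a (Suc n)")
    case True
    have "{i. i < Suc n \<and> a i \<subset> a (Suc i)} = insert n {i. i < n \<and> a i \<subset> a (Suc i)}"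
      using True by auto
    then have card: "card {i. i < Suc n \<and> a i \<subset> a (Suc i)} = Suc s" unfolding s_def by simp
    have "ideal_chain B I J (Suc s) (C(Suc s := a (Suc n)))"
      using C True Suc.prems(1) unfolding ideal_chain_def
      by (auto simp: less_Suc_eq le_Suc_eq)
    then show ?thesis unfolding card by auto
  next
    case False
    then have "a n = a (Suc n)" using Suc.prems by auto
    moreover have "{i. i < Suc n \<and> a i \<subset> a (Suc i)} = {i. i < n \<and> a i \<subset> a (Suc i)}"
      using False less_Suc_eq by auto
    ultimately show ?thesis using C unfolding s_def by auto
  qed
qed

lemma card_strict_steps_le_ideal_length:
  assumes "\<forall>i\<le>n. ideal (a i) B \<and> I \<subseteq> a i \<and> a i \<subseteq> J" "\<forall>i<n. a i \<subseteq> a (Suc i)"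
  shows "enat (card {i. i < n \<and> a i \<subset> a (Suc i)}) \<le> ideal_length B I J"
  using ideal_chain_of_mono_seq[OF assms] ideal_chain_le_ideal_length by blast

text \<open>A strict chain \<open>C\<close> between \<open>I\<close> and \<open>K\<close> is cut by \<open>J\<close> into the chains \<open>C i \<inter> J\<close> and
  \<open>C i + J\<close>, and by the modular law every strict step of \<open>C\<close> is strict in one of them.\<close>

lemma (in ring) ideal_length_triangle:
  assumes I: "ideal I R" and J: "ideal J R" and K: "ideal K R" and "I \<subseteq> J" "J \<subseteq> K"
  shows "ideal_length R I K \<le> ideal_length R I J + ideal_length R J K"
proof (rule ideal_length_leI)
  fix n C assume c: "ideal_chain R I K n C"
  define a where "a i = C i \<inter> J" for i
  define b where "b i = C i <+>\<^bsub>R\<^esub> J" for i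
  define steps where "steps d = {i. i < n \<and> d i \<subset> d (Suc i)}" for d :: "nat \<Rightarrow> 'a set"
  have ci: "i \<le> n \<Longrightarrow> ideal (C i) R \<and> I \<subseteq> C i \<and> C i \<subseteq> K" for i
    using c unfolding ideal_chain_def by auto
  have cs: "i < n \<Longrightarrow> C i \<subset> C (Suc i)" for i using c unfolding ideal_chain_def by auto
  have a: "\<forall>i\<le>n. ideal (a i) R \<and> I \<subseteq> a i \<and> a i \<subseteq> J" "\<forall>i<n. a i \<subseteq> a (Suc i)"
    using ci cs \<open>I \<subseteq> J\<close> J unfolding a_def by (blast intro: i_intersect)+
  have b1: "\<forall>i\<le>n. ideal (b i) R \<and> J \<subseteq> b i \<and> b i \<subseteq> K"
    using ci J \<open>J \<subseteq> K\<close> K set_add_ideal_lub unfolding b_def by auto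
  have b2: "\<forall>i<n. b i \<subseteq> b (Suc i)"
  proof (intro allI impI)
    fix i assume i: "i < n"
    have "ideal (C (Suc i)) R" "ideal (C i) R" using ci i by auto
    then show "b i \<subseteq> b (Suc i)" unfolding b_def
      using set_add_ideal_lub[OF _ J] cs[OF i] by (meson psubset_imp_subset subset_trans)
  qed
  have "{..<n} \<subseteq> steps a \<union> steps b"
  proof
    fix i assume "i \<in> {..<n}"
    then have i: "i < n" by simp
    show "i \<in> steps a \<union> steps b"
    proof (rule ccontr)
      assume "i \<notin> steps a \<union> steps b"
      then have "a i = a (Suc i)" "b i = b (Suc i)"
        using a(2) b2 i unfolding steps_def by auto
      then have "C i = C (Suc i)"
        using ideal_eq_of_modular[OF _ _ J] ci[of i] ci[of "Suc i"] cs[OF i] i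
        unfolding a_def b_def by auto
      then show False using cs[OF i] by simp
    qed
  qed
  then have "n \<le> card (steps a \<union> steps b)"
    using card_mono[of "steps a \<union> steps b" "{..<n}"] unfolding steps_def by auto
  also have "\<dots> \<le> card (steps a) + card (steps b)" by (rule card_Un_le)
  finally have "enat n \<le> enat (card (steps a)) + enat (card (steps b))" by simp
  also have "\<dots> \<le> ideal_length R I J + ideal_length R J K"
    using card_strict_steps_le_ideal_length[OF a] card_strict_steps_le_ideal_length[OF b1 b2]
    unfolding steps_def by (rule add_mono)
  finally show "enat n \<le> ideal_length R I J + ideal_length R J K" .
qed


lemma quot_length_carrier: "quot_length B (carrier B) = 0"
proof -
  have "n = 0" if "ideal_chain B (carrier B) (carrier B) n C" for n C
  proof (rule ccontr)
    assume "n \<noteq> 0"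
    then have "C 0 \<subset> C 1" "C 0 = carrier B" "C 1 \<subseteq> carrier B"
      using that unfolding ideal_chain_def by auto
    then show False by auto
  qed
  then have "quot_length B (carrier B) \<le> 0"
    unfolding quot_length_eq_ideal_length by (intro ideal_length_leI) (simp add: zero_enat_def)
  then show ?thesis by simp
qed

lemma (in ring) one_le_quot_length:
  assumes "ideal I R" "I \<noteq> carrier R"
  shows "1 \<le> quot_length R I"
proof -
  have "ideal_chain R I (carrier R) 1 (\<lambda>i. if i = 0 then I else carrier R)"
    unfolding ideal_chain_def using assms ideal_subset_carrier[OF assms(1)] oneideal by auto
  from ideal_chain_le_ideal_length[OF this] show ?thesis
    by (simp add: one_enat_def quot_length_eq_ideal_length)
qed

lemma quot_length_antimono: "I \<subseteq> I' \<Longrightarrow> quot_length B I' \<le> quot_length B I"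
  unfolding quot_length_eq_ideal_length by (rule ideal_length_mono) auto

lemma quot_length_psubset_less:
  assumes I: "ideal I B" and I': "ideal I' B" and "I \<subset> I'" and k: "quot_length B I = enat k"
  shows "\<exists>k'<k. quot_length B I' = enat k'"
proof -
  have step: "Suc n \<le> k" if c: "ideal_chain B I' (carrier B) n C" for n C
  proof -
    have ci: "\<And>i. i \<le> n \<Longrightarrow> ideal (C i) B \<and> I' \<subseteq> C i \<and> C i \<subseteq> carrier B"
      and cs: "\<And>i. i < n \<Longrightarrow> C i \<subset> C (Suc i)"
      using c unfolding ideal_chain_def by auto
    let ?D = "\<lambda>i. if i = 0 then I else C (i - 1)"
    have "ideal_chain B I (carrier B) (Suc n) ?D" unfolding ideal_chain_def
    proof (intro conjI allI impI)
      fix i assume "i \<le> Suc n"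
      then have "ideal (?D i) B \<and> I \<subseteq> ?D i \<and> ?D i \<subseteq> carrier B"
        using ci[of "i - 1"] I ideal_subset_carrier[OF I] \<open>I \<subset> I'\<close> by (cases i) auto
      then show "ideal (?D i) B" "I \<subseteq> ?D i" "?D i \<subseteq> carrier B" by blast+
    next
      fix i assume "i < Suc n"
      then show "?D i \<subset> ?D (Suc i)" using cs[of "i - 1"] ci[of 0] \<open>I \<subset> I'\<close> by (cases i) auto
    qed
    from ideal_chain_le_ideal_length[OF this] k show ?thesis
      by (simp add: quot_length_eq_ideal_length)
  qed
  have "ideal_chain B I' (carrier B) 0 (\<lambda>_. I')"
    using I' ideal_subset_carrier[OF I'] unfolding ideal_chain_def by auto
  from step[OF this] have "1 \<le> k" by simp
  have "quot_length B I' \<le> enat (k - 1)"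
    unfolding quot_length_eq_ideal_length
    by (rule ideal_length_leI) (use step in fastforce)
  then obtain k' where "quot_length B I' = enat k'" "k' \<le> k - 1" using enat_ile by fastforce
  then show ?thesis using \<open>1 \<le> k\<close> by (intro exI[of _ k']) auto
qed

text \<open>Multiplication by \<open>y\<close> maps \<open>(K + (y))/K\<close> injectively into \<open>R/(K : y)\<close>.\<close>

lemma (in cring) ideal_length_add_PIdl_le:
  assumes K: "ideal K R" and y: "y \<in> carrier R"
  shows "ideal_length R K (K <+>\<^bsub>R\<^esub> PIdl y) \<le> quot_length R (ideal_quotient R K y)"
  unfolding quot_length_eq_ideal_length
proof (rule ideal_length_le_of_strict_map[where h = "\<lambda>C. ideal_quotient R C y"])
  fix C assume "ideal C R" "K \<subseteq> C" "C \<subseteq> K <+>\<^bsub>R\<^esub> PIdl y"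
  then show "ideal (ideal_quotient R C y) R \<and> ideal_quotient R K y \<subseteq> ideal_quotient R C y \<and>
      ideal_quotient R C y \<subseteq> carrier R"
    using ideal_quotient_ideal[OF _ y] ideal_quotient_mono unfolding ideal_quotient_def by auto
next
  fix C C' assume C: "ideal C R" "K \<subseteq> C" "ideal C' R" "C' \<subseteq> K <+>\<^bsub>R\<^esub> PIdl y" "C \<subset> C'"
  obtain c where c: "c \<in> C'" "c \<notin> C" using C by auto
  then obtain k b where kb: "k \<in> K" "b \<in> carrier R" "c = k \<oplus> b \<otimes> y"
    using C(4) mem_add_PIdl_iff by blast
  have kc: "k \<in> carrier R" using kb K ideal_subset_carrier by blast
  have "\<ominus> k \<oplus> (k \<oplus> b \<otimes> y) = b \<otimes> y" using kc kb y by algebra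
  then have "b \<otimes> y = \<ominus> k \<oplus> c" using kb by simp
  moreover have "\<ominus> k \<in> C'" using kb C K
    by (meson additive_subgroup.a_inv_closed ideal.axioms(1) psubset_imp_subset subsetD)
  ultimately have "b \<otimes> y \<in> C'" using c C(3)
    by (simp add: additive_subgroup.a_closed ideal.axioms(1))
  then have "b \<in> ideal_quotient R C' y" unfolding ideal_quotient_def using kb by simp
  moreover have "b \<notin> ideal_quotient R C y"
  proof
    assume "b \<in> ideal_quotient R C y"
    then have "b \<otimes> y \<in> C" unfolding ideal_quotient_def by simp
    then have "c \<in> C" using kb C(1,2) by (simp add: additive_subgroup.a_closed ideal.axioms(1) subsetD)
    then show False using c by simp
  qed
  ultimately show "ideal_quotient R C y \<subset> ideal_quotient R C' y"
    using ideal_quotient_mono[of C C'] C(5) by blast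
qed

lemma (in cring) quot_length_le_split:
  assumes K: "ideal K R" and y: "y \<in> carrier R"
  shows "quot_length R K \<le> quot_length R (K <+>\<^bsub>R\<^esub> PIdl y) + quot_length R (ideal_quotient R K y)"
proof -
  have J: "ideal (K <+>\<^bsub>R\<^esub> PIdl y) R" by (rule add_PIdl_ideal[OF K y])
  have "quot_length R K \<le> ideal_length R K (K <+>\<^bsub>R\<^esub> PIdl y) + quot_length R (K <+>\<^bsub>R\<^esub> PIdl y)"
    unfolding quot_length_eq_ideal_length
    by (rule ideal_length_triangle[OF K J oneideal subset_add_PIdl[OF K y] ideal_subset_carrier[OF J]])
  also have "\<dots> \<le> quot_length R (ideal_quotient R K y) + quot_length R (K <+>\<^bsub>R\<^esub> PIdl y)"
    using ideal_length_add_PIdl_le[OF K y] by (rule add_right_mono)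
  finally show ?thesis by (simp add: add.commute)
qed


subsection \<open>Local rings\<close>

lemma local_ring_cring: "local_ring B \<Longrightarrow> cring B"
  unfolding local_ring_def by simp

lemma noeth_local_ring_local: "noeth_local_ring B \<Longrightarrow> local_ring B"
  unfolding noeth_local_ring_def by simp

lemma maximalideal_max_ideal: "local_ring B \<Longrightarrow> maximalideal (max_ideal B) B"
  unfolding local_ring_def max_ideal_def by (rule theI') simp

lemma max_ideal_unique: "local_ring B \<Longrightarrow> maximalideal M B \<Longrightarrow> M = max_ideal B"
  using maximalideal_max_ideal unfolding local_ring_def by blast

lemma ideal_max_ideal: "local_ring B \<Longrightarrow> ideal (max_ideal B) B"
  using maximalideal_max_ideal maximalideal.axioms(1) by blast

lemma max_ideal_subset_carrier: "local_ring B \<Longrightarrow> max_ideal B \<subseteq> carrier B"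
  using ideal_max_ideal ideal_subset_carrier by blast

lemma max_ideal_ne_carrier: "local_ring B \<Longrightarrow> max_ideal B \<noteq> carrier B"
  using maximalideal.I_notcarr[OF maximalideal_max_ideal] by metis

lemma one_notin_max_ideal: "local_ring B \<Longrightarrow> \<one>\<^bsub>B\<^esub> \<notin> max_ideal B"
  using ideal.one_imp_carrier[OF ideal_max_ideal] max_ideal_ne_carrier by blast

lemma (in cring) exists_maximalideal:
  assumes I: "ideal I R" "I \<noteq> carrier R"
  shows "\<exists>M. maximalideal M R \<and> I \<subseteq> M"
proof -
  let ?A = "{J. ideal J R \<and> I \<subseteq> J \<and> \<one> \<notin> J}"
  have "\<one> \<notin> I" using I ideal.one_imp_carrier by blast
  have "\<exists>M\<in>?A. \<forall>U\<in>?A. M \<subseteq> U \<longrightarrow> U = M"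
  proof (rule subset_Zorn_nonempty)
    show "?A \<noteq> {}" using I \<open>\<one> \<notin> I\<close> by blast
  next
    fix \<C> assume ne: "\<C> \<noteq> {}" and ch: "subset.chain ?A \<C>"
    have CA: "\<And>U. U \<in> \<C> \<Longrightarrow> ideal U R \<and> I \<subseteq> U \<and> \<one> \<notin> U"
      using ch unfolding subset_chain_def by blast
    have "subset.chain {J. ideal J R} \<C>"
      using ch CA unfolding subset_chain_def by auto
    from chain_Union_is_ideal[OF this] have "ideal (\<Union>\<C>) R" using ne by simp
    moreover obtain C0 where "C0 \<in> \<C>" using ne by blast
    then have "I \<subseteq> \<Union>\<C>" using CA by blast
    moreover have "\<one> \<notin> \<Union>\<C>" using CA by blast
    ultimately show "\<Union>\<C> \<in> ?A" by blast
  qed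
  then obtain M where M: "M \<in> ?A" and "\<forall>U\<in>?A. M \<subseteq> U \<longrightarrow> U = M" by (rule bexE)
  then have M_max: "\<And>U. U \<in> ?A \<Longrightarrow> M \<subseteq> U \<Longrightarrow> U = M" by simp
  have "maximalideal M R"
  proof (rule maximalidealI)
    show "ideal M R" "carrier R \<noteq> M" using M by auto
    fix J assume J: "ideal J R" "M \<subseteq> J" "J \<subseteq> carrier R"
    show "J = M \<or> J = carrier R"
    proof (cases "\<one> \<in> J")
      case True
      then show ?thesis using ideal.one_imp_carrier[OF J(1)] by simp
    next
      case False
      then show ?thesis using M_max[of J] J M by auto
    qed
  qed
  then show ?thesis using M by blast
qed

lemma ideal_subset_max_ideal:
  assumes loc: "local_ring B" and "ideal I B" "I \<noteq> carrier B"
  shows "I \<subseteq> max_ideal B"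
  using cring.exists_maximalideal[OF local_ring_cring[OF loc] assms(2,3)] max_ideal_unique[OF loc]
  by blast

lemma (in cring) local_ring_unit:
  assumes loc: "local_ring R" and x: "x \<in> carrier R" "x \<notin> max_ideal R"
  shows "\<exists>v\<in>carrier R. v \<otimes> x = \<one>"
proof -
  have "x \<in> PIdl x" using x(1) cgenideal_self by blast
  then have "PIdl x = carrier R"
    using ideal_subset_max_ideal[OF loc cgenideal_ideal[OF x(1)]] x by blast
  then have "\<one> \<in> PIdl x" by simp
  then show ?thesis unfolding cgenideal_def by auto
qed

lemma (in cring) local_ring_ideal_cancel:
  assumes loc: "local_ring R" and I: "ideal I R" and u: "u \<in> carrier R" "u \<notin> max_ideal R"
    and y: "y \<in> carrier R" and uy: "u \<otimes> y \<in> I"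
  shows "y \<in> I"
proof -
  obtain v where v: "v \<in> carrier R" "v \<otimes> u = \<one>" using local_ring_unit[OF loc u] by blast
  have "v \<otimes> (u \<otimes> y) \<in> I" using I uy v(1) by (rule ideal.I_l_closed)
  also have "v \<otimes> (u \<otimes> y) = y" using u(1) v y by (simp flip: m_assoc)
  finally show ?thesis .
qed

lemma (in cring) one_minus_notin_max_ideal:
  assumes loc: "local_ring R" and c: "c \<in> max_ideal R"
  shows "\<one> \<ominus> c \<notin> max_ideal R"
proof
  have cc: "c \<in> carrier R" using c max_ideal_subset_carrier[OF loc] by blast
  assume "\<one> \<ominus> c \<in> max_ideal R"
  then have "(\<one> \<ominus> c) \<oplus> c \<in> max_ideal R" using c ideal_max_ideal[OF loc]
    by (simp add: additive_subgroup.a_closed ideal.axioms(1))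
  moreover have "(\<one> \<ominus> c) \<oplus> c = \<one>" using cc by algebra
  ultimately show False using one_notin_max_ideal[OF loc] by simp
qed

text \<open>A Nakayama-type step: for \<open>a \<in> m\<close>, \<open>y \<in> I + (a y)\<close> forces \<open>y \<in> I\<close>, because \<open>1 - b a\<close> is a
  unit.\<close>

lemma (in cring) add_PIdl_mult_psubset:
  assumes loc: "local_ring R" and I: "ideal I R" and a: "a \<in> max_ideal R"
    and y: "y \<in> carrier R" "y \<notin> I"
  shows "I <+>\<^bsub>R\<^esub> PIdl (a \<otimes> y) \<subset> I <+>\<^bsub>R\<^esub> PIdl y"
proof -
  have ac: "a \<in> carrier R" using a max_ideal_subset_carrier[OF loc] by blast
  have "I <+>\<^bsub>R\<^esub> PIdl (a \<otimes> y) \<subseteq> I <+>\<^bsub>R\<^esub> PIdl y"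
  proof
    fix z assume "z \<in> I <+>\<^bsub>R\<^esub> PIdl (a \<otimes> y)"
    then obtain i b where ib: "i \<in> I" "b \<in> carrier R" "z = i \<oplus> b \<otimes> (a \<otimes> y)"
      using mem_add_PIdl_iff by blast
    then have "z = i \<oplus> (b \<otimes> a) \<otimes> y" using ac y by (simp add: m_assoc)
    then show "z \<in> I <+>\<^bsub>R\<^esub> PIdl y" using ib ac mem_add_PIdl_iff by blast
  qed
  moreover have "y \<notin> I <+>\<^bsub>R\<^esub> PIdl (a \<otimes> y)"
  proof
    assume "y \<in> I <+>\<^bsub>R\<^esub> PIdl (a \<otimes> y)"
    then obtain i b where ib: "i \<in> I" "b \<in> carrier R" "y = i \<oplus> b \<otimes> (a \<otimes> y)"
      using mem_add_PIdl_iff by blast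
    have ic: "i \<in> carrier R" using ib(1) ideal_subset_carrier[OF I] by blast
    define t where "t = b \<otimes> (a \<otimes> y)"
    have tc: "t \<in> carrier R" unfolding t_def using ib(2) ac y by simp
    have h: "y = i \<oplus> t" using ib(3) unfolding t_def .
    have "(\<one> \<ominus> b \<otimes> a) \<otimes> y = y \<ominus> t" unfolding t_def using ib(2) ac y by algebra
    also have "\<dots> = (i \<oplus> t) \<ominus> t" using h by simp
    also have "\<dots> = i" using ic tc by algebra
    finally have "(\<one> \<ominus> b \<otimes> a) \<otimes> y \<in> I" using ib(1) by simp
    moreover have "b \<otimes> a \<in> max_ideal R" using ideal.I_l_closed[OF ideal_max_ideal[OF loc] a ib(2)] .
    moreover have "\<one> \<ominus> b \<otimes> a \<in> carrier R" using ib(2) ac by simp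
    ultimately have "y \<in> I"
      using local_ring_ideal_cancel[OF loc I _ one_minus_notin_max_ideal[OF loc] y(1)] by blast
    then show False using y(2) by simp
  qed
  moreover have "y \<in> I <+>\<^bsub>R\<^esub> PIdl y" by (rule mem_add_PIdl[OF I y(1)])
  ultimately show ?thesis by blast
qed


subsection \<open>Finite length and primary ideals\<close>

lemma (in cring) mem_primeideal_of_pow_mem:
  assumes P: "primeideal P R" and z: "z \<in> carrier R"
  shows "z [^] (n::nat) \<in> P \<Longrightarrow> z \<in> P"
proof (induction n)
  case 0
  then have "P = carrier R" using ideal.one_imp_carrier[OF primeideal.axioms(1)[OF P]] by simp
  then show ?case using z by simp
next
  case (Suc n)
  then show ?case using primeideal.I_prime[OF P _ z, of "z [^] n"] z by auto
qed

lemma (in cring) quot_length_le_1_of_max_ideal_subset: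
  assumes loc: "local_ring R" and q: "ideal q R" and mq: "max_ideal R \<subseteq> q"
  shows "quot_length R q \<le> 1"
  unfolding quot_length_eq_ideal_length
proof (rule ideal_length_leI)
  fix n C assume c: "ideal_chain R q (carrier R) n C"
  show "enat n \<le> 1"
  proof (rule ccontr)
    assume "\<not> enat n \<le> 1"
    then have "2 \<le> n" by (simp add: one_enat_def)
    then have C: "q \<subseteq> C 0" "C 0 \<subset> C 1" "C 1 \<subset> C 2" "ideal (C 1) R" "C 2 \<subseteq> carrier R"
      using c unfolding ideal_chain_def by (auto simp: numeral_2_eq_2)
    then have "C 1 = max_ideal R \<or> C 1 = carrier R"
      using maximalideal.I_maximal[OF maximalideal_max_ideal[OF loc] C(4)] mq
        ideal_subset_carrier[OF C(4)] by blast
    then show False using C mq by blast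
  qed
qed

lemma (in cring) pow_mem_add_PIdl_update:
  assumes q: "ideal q R" and y: "y \<in> carrier R" and e: "\<forall>z\<in>G. z [^] (e z :: nat) \<in> q"
    and z: "z \<in> G"
  shows "z [^] (e(y := 1)) z \<in> q <+>\<^bsub>R\<^esub> PIdl y"
proof (cases "z = y")
  case True
  then show ?thesis using mem_add_PIdl[OF q y] y by simp
next
  case False
  then show ?thesis using e z subset_add_PIdl[OF q y] by auto
qed

lemma (in cring) pow_mem_ideal_quotient_update:
  assumes q: "ideal q R" and y: "y \<in> carrier R" and e: "\<forall>z\<in>G. z [^] (e z :: nat) \<in> q"
    and "y \<in> G" "1 \<le> e y" and z: "z \<in> G"
  shows "z [^] (e(y := e y - 1)) z \<in> ideal_quotient R q y"
proof (cases "z = y")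
  case True
  have "y [^] (e y - 1) \<otimes> y = y [^] e y" using \<open>1 \<le> e y\<close> by (simp flip: nat_pow_Suc)
  then show ?thesis using True e \<open>y \<in> G\<close> y unfolding ideal_quotient_def by simp
next
  case False
  then show ?thesis using e z subset_ideal_quotient[OF q y] by auto
qed

text \<open>Induction on \<open>\<Sum>\<^sub>y e y\<close> where \<open>y\<^sup>e\<^sup>y \<in> q\<close> for the generators \<open>y\<close> of \<open>m\<close>: for \<open>y \<notin> q\<close>,
  both \<open>q + (y)\<close> and \<open>(q : y)\<close> need a smaller exponent sum.\<close>

lemma (in cring) quot_length_finite_of_gen_powers:
  assumes loc: "local_ring R" and G: "finite G" "G \<subseteq> carrier R" "max_ideal R = Idl G"
  shows "ideal q R \<Longrightarrow> \<forall>y\<in>G. y [^] (e y :: nat) \<in> q \<Longrightarrow> quot_length R q \<noteq> \<infinity>"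
proof (induction "sum e G" arbitrary: q e rule: less_induct)
  case less
  note q = less.prems(1) and e = less.prems(2)
  show ?case
  proof (cases "G \<subseteq> q")
    case True
    then have "max_ideal R \<subseteq> q" using G genideal_minimal q by simp
    then show ?thesis using quot_length_le_1_of_max_ideal_subset[OF loc q]
      by (metis infinity_ileE one_enat_def)
  next
    case False
    then obtain y where y: "y \<in> G" "y \<notin> q" by blast
    have yc: "y \<in> carrier R" using y G by blast
    have "y [^] e y \<in> q" using e y by blast
    have ey: "2 \<le> e y"
    proof (rule ccontr)
      assume "\<not> 2 \<le> e y"
      then have "e y = 0 \<or> e y = 1" by auto
      then have "\<one> \<in> q \<or> y \<in> q" using \<open>y [^] e y \<in> q\<close> yc by auto
      then show False using y(2) yc ideal.one_imp_carrier[OF q] by blast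
    qed
    define e1 where "e1 = e(y := 1)"
    define e2 where "e2 = e(y := e y - 1)"
    have rest: "sum e1 (G - {y}) = sum e (G - {y})" "sum e2 (G - {y}) = sum e (G - {y})"
      unfolding e1_def e2_def by (auto intro: sum.cong)
    have "sum e G = e y + sum e (G - {y})" "sum e1 G = e1 y + sum e1 (G - {y})"
      "sum e2 G = e2 y + sum e2 (G - {y})"
      by (rule sum.remove[OF G(1) y(1)])+
    then have less1: "sum e1 G < sum e G" and less2: "sum e2 G < sum e G"
      using rest ey unfolding e1_def e2_def by simp_all
    have "z [^] e1 z \<in> q <+>\<^bsub>R\<^esub> PIdl y" if "z \<in> G" for z
      unfolding e1_def using pow_mem_add_PIdl_update[OF q yc e that] .
    then have fin1: "quot_length R (q <+>\<^bsub>R\<^esub> PIdl y) \<noteq> \<infinity>"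
      using less(1)[OF less1 add_PIdl_ideal[OF q yc]] by blast
    have "z [^] e2 z \<in> ideal_quotient R q y" if "z \<in> G" for z
      unfolding e2_def using pow_mem_ideal_quotient_update[OF q yc e y(1) _ that] ey by simp
    then have fin2: "quot_length R (ideal_quotient R q y) \<noteq> \<infinity>"
      using less(1)[OF less2 ideal_quotient_ideal[OF q yc]] by blast
    then obtain k1 k2 where "quot_length R (q <+>\<^bsub>R\<^esub> PIdl y) = enat k1"
      "quot_length R (ideal_quotient R q y) = enat k2"
      using fin1 by auto
    then have "quot_length R q \<le> enat (k1 + k2)" using quot_length_le_split[OF q yc] by simp
    then show ?thesis by (cases "quot_length R q") auto
  qed
qed

lemma (in cring) quot_length_finite:
  assumes nl: "noeth_local_ring R" and q: "ideal q R"
    and powers: "\<forall>x\<in>max_ideal R. \<exists>e::nat. x [^] e \<in> q"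
  shows "quot_length R q \<noteq> \<infinity>"
proof -
  have loc: "local_ring R" using noeth_local_ring_local[OF nl] .
  obtain G where G: "finite G" "G \<subseteq> carrier R" "max_ideal R = Idl G"
    using nl ideal_max_ideal[OF loc] unfolding noeth_local_ring_def noetherian_ring_def by blast
  have "G \<subseteq> max_ideal R" using G genideal_self by simp
  then have "\<forall>y\<in>G. \<exists>e::nat. y [^] e \<in> q" using powers by blast
  then obtain e where "\<forall>y\<in>G. y [^] (e y :: nat) \<in> q" by (metis bchoice)
  then show ?thesis using quot_length_finite_of_gen_powers[OF loc G q] by blast
qed

text \<open>Conversely, if \<open>x \<in> m\<close> has no power in \<open>Q\<close>, the ideals \<open>Q + (x\<^sup>j)\<close> strictly decrease, so
  their colengths exceed every bound.\<close>

lemma (in cring) pow_mem_of_quot_length_finite: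
  assumes loc: "local_ring R" and Q: "ideal Q R" and k: "quot_length R Q = enat k"
    and x: "x \<in> max_ideal R"
  shows "\<exists>e::nat. x [^] e \<in> Q"
proof (rule ccontr)
  assume none: "\<not> (\<exists>e::nat. x [^] e \<in> Q)"
  have xc: "x \<in> carrier R" using x max_ideal_subset_carrier[OF loc] by blast
  define P where "P j = Q <+>\<^bsub>R\<^esub> PIdl (x [^] (j::nat))" for j
  have P: "ideal (P j) R" for j unfolding P_def using add_PIdl_ideal[OF Q] xc by simp
  have bounded: "\<exists>m. quot_length R (P j) = enat m \<and> m \<le> k" for j
  proof -
    have "quot_length R (P j) \<le> enat k"
      unfolding P_def k[symmetric] using subset_add_PIdl[OF Q] xc by (simp add: quot_length_antimono)
    then show ?thesis using enat_ile by fastforce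
  qed
  have "P (Suc j) \<subset> P j" for j
    using add_PIdl_mult_psubset[OF loc Q x, of "x [^] j"] none xc
    unfolding P_def by (simp add: m_comm[OF xc nat_pow_closed[OF xc]])
  then have grow: "\<exists>m. quot_length R (P j) = enat m \<and> j \<le> m" for j
  proof (induction j)
    case 0
    then show ?case using bounded by blast
  next
    case (Suc j)
    obtain m where m: "quot_length R (P j) = enat m" "j \<le> m" using Suc by blast
    obtain m' where m': "quot_length R (P (Suc j)) = enat m'" using bounded by blast
    have "m < m'" using quot_length_psubset_less[OF P P Suc.prems m'] m(1) by auto
    then show ?case using m' m(2) by auto
  qed
  show False using grow[of "Suc k"] bounded[of "Suc k"] by auto
qed


lemma (in cring) radical_ideal_subset_max_ideal:
  assumes loc: "local_ring R" and "Q \<subseteq> max_ideal R"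
  shows "radical_ideal R Q \<subseteq> max_ideal R"
proof
  fix x assume "x \<in> radical_ideal R Q"
  then obtain e :: nat where "x \<in> carrier R" "x [^] e \<in> max_ideal R"
    using assms(2) unfolding radical_ideal_def by blast
  then show "x \<in> max_ideal R"
    using mem_primeideal_of_pow_mem[OF maximalideal_prime[OF maximalideal_max_ideal[OF loc]]] by blast
qed

lemma (in cring) is_primary_for_max_ideal_iff:
  assumes nl: "noeth_local_ring R" and Q: "ideal Q R" "Q \<subseteq> max_ideal R"
  shows "is_primary_for R (max_ideal R) Q \<longleftrightarrow> quot_length R Q \<noteq> \<infinity>"
proof
  assume "is_primary_for R (max_ideal R) Q"
  then have "\<forall>x\<in>max_ideal R. \<exists>e::nat. x [^] e \<in> Q"
    unfolding is_primary_for_def radical_ideal_def by blast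
  then show "quot_length R Q \<noteq> \<infinity>" by (rule quot_length_finite[OF nl Q(1)])
next
  have loc: "local_ring R" by (rule noeth_local_ring_local[OF nl])
  assume "quot_length R Q \<noteq> \<infinity>"
  then obtain k where k: "quot_length R Q = enat k" by auto
  have "max_ideal R \<subseteq> radical_ideal R Q"
    using pow_mem_of_quot_length_finite[OF loc Q(1) k] max_ideal_subset_carrier[OF loc]
    unfolding radical_ideal_def by blast
  then have rad: "radical_ideal R Q = max_ideal R"
    using radical_ideal_subset_max_ideal[OF loc Q(2)] by blast
  have "primary_ideal R Q" unfolding primary_ideal_def
  proof (intro conjI ballI impI)
    show "ideal Q R" by (rule Q(1))
    show "Q \<noteq> carrier R" using Q(2) max_ideal_ne_carrier[OF loc] max_ideal_subset_carrier[OF loc]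
      by blast
    fix x y assume x: "x \<in> carrier R" and y: "y \<in> carrier R" and xy: "x \<otimes> y \<in> Q"
    show "x \<in> Q \<or> (\<exists>n::nat. y [^] n \<in> Q)"
    proof (cases "y \<in> max_ideal R")
      case True
      then show ?thesis using rad unfolding radical_ideal_def by blast
    next
      case False
      have "y \<otimes> x \<in> Q" using xy m_comm[OF x y] by simp
      then show ?thesis using local_ring_ideal_cancel[OF loc Q(1) y False x] by simp
    qed
  qed
  then show "is_primary_for R (max_ideal R) Q" unfolding is_primary_for_def using rad by simp
qed

lemma finite_length_hom_iff:
  assumes nl: "noeth_local_ring B" and g: "g \<in> ring_hom A B"
    and g_local: "g ` max_ideal A \<subseteq> max_ideal B"
  shows "finite_length_hom A B g \<longleftrightarrow> quot_length B (Idl\<^bsub>B\<^esub> (g ` max_ideal A)) \<noteq> \<infinity>"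
proof -
  have loc: "local_ring B" by (rule noeth_local_ring_local[OF nl])
  interpret B: cring B by (rule local_ring_cring[OF loc])
  have "g ` max_ideal A \<subseteq> carrier B" using g_local max_ideal_subset_carrier[OF loc] by blast
  then have "ideal (Idl\<^bsub>B\<^esub> (g ` max_ideal A)) B" by (rule B.genideal_ideal)
  moreover have "Idl\<^bsub>B\<^esub> (g ` max_ideal A) \<subseteq> max_ideal B"
    by (rule B.genideal_minimal[OF ideal_max_ideal[OF loc] g_local])
  ultimately show ?thesis
    unfolding finite_length_hom_def using B.is_primary_for_max_ideal_iff[OF nl] g g_local by simp
qed

lemma quot_length_eq_hom_length:
  assumes "noeth_local_ring B" "finite_length_hom A B g"
  shows "quot_length B (Idl\<^bsub>B\<^esub> (g ` max_ideal A)) = enat (hom_length A B g)"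
proof -
  have "quot_length B (Idl\<^bsub>B\<^esub> (g ` max_ideal A)) \<noteq> \<infinity>"
    using assms finite_length_hom_iff[OF assms(1)] unfolding finite_length_hom_def by blast
  then show ?thesis unfolding hom_length_def by auto
qed


subsection \<open>Colength of extended ideals\<close>

lemma Idl_image_Idl:
  assumes A: "cring A" and B: "cring B" and g: "g \<in> ring_hom A B" and W: "W \<subseteq> carrier A"
  shows "Idl\<^bsub>B\<^esub> (g ` (Idl\<^bsub>A\<^esub> W)) = Idl\<^bsub>B\<^esub> (g ` W)"
proof -
  interpret A: cring A by (rule A)
  interpret B: cring B by (rule B)
  have gW: "g ` W \<subseteq> carrier B" using W ring_hom_closed[OF g] by blast
  have IB: "ideal (Idl\<^bsub>B\<^esub> (g ` W)) B" by (rule B.genideal_ideal[OF gW])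
  have "ideal {r \<in> carrier A. g r \<in> Idl\<^bsub>B\<^esub> (g ` W)} A"
    by (rule ring_hom_ring.ideal_vimage[OF ring_hom_ringI2[OF A.ring_axioms B.ring_axioms g] IB])
  moreover have "W \<subseteq> {r \<in> carrier A. g r \<in> Idl\<^bsub>B\<^esub> (g ` W)}" using W B.genideal_self[OF gW] by auto
  ultimately have "Idl\<^bsub>A\<^esub> W \<subseteq> {r \<in> carrier A. g r \<in> Idl\<^bsub>B\<^esub> (g ` W)}" by (rule A.genideal_minimal)
  then have "g ` (Idl\<^bsub>A\<^esub> W) \<subseteq> Idl\<^bsub>B\<^esub> (g ` W)" by blast
  then have le: "Idl\<^bsub>B\<^esub> (g ` (Idl\<^bsub>A\<^esub> W)) \<subseteq> Idl\<^bsub>B\<^esub> (g ` W)" by (rule B.genideal_minimal[OF IB])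
  have "g ` (Idl\<^bsub>A\<^esub> W) \<subseteq> carrier B"
    using ideal_subset_carrier[OF A.genideal_ideal[OF W]] ring_hom_closed[OF g] by blast
  moreover have "g ` W \<subseteq> g ` (Idl\<^bsub>A\<^esub> W)" using A.genideal_self[OF W] by blast
  ultimately have "Idl\<^bsub>B\<^esub> (g ` W) \<subseteq> Idl\<^bsub>B\<^esub> (g ` (Idl\<^bsub>A\<^esub> W))" by (rule B.subset_Idl_subset)
  with le show ?thesis by blast
qed

text \<open>A socle element of \<open>R/I\<close>: among the \<open>y \<notin> I\<close> take one for which \<open>I + (y)\<close> has maximal colength;
  if \<open>a y \<notin> I\<close> for some \<open>a \<in> m\<close>, then \<open>I + (a y) \<subset> I + (y)\<close> would have larger colength.\<close>

lemma (in cring) exists_socle_element: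
  assumes loc: "local_ring R" and I: "ideal I R" "I \<noteq> carrier R" and k: "quot_length R I = enat k"
  shows "\<exists>y\<in>carrier R. y \<notin> I \<and> (\<forall>a\<in>max_ideal R. a \<otimes> y \<in> I)"
proof -
  define N where "N = {n. \<exists>y\<in>carrier R. y \<notin> I \<and> quot_length R (I <+>\<^bsub>R\<^esub> PIdl y) = enat n}"
  have bounded: "\<exists>n. quot_length R (I <+>\<^bsub>R\<^esub> PIdl y) = enat n \<and> n \<le> k" if "y \<in> carrier R" for y
  proof -
    have "quot_length R (I <+>\<^bsub>R\<^esub> PIdl y) \<le> enat k"
      unfolding k[symmetric] by (rule quot_length_antimono[OF subset_add_PIdl[OF I(1) that]])
    then show ?thesis using enat_ile by fastforce
  qed
  have "\<one> \<notin> I" using I ideal.one_imp_carrier by blast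
  moreover obtain n where "quot_length R (I <+>\<^bsub>R\<^esub> PIdl \<one>) = enat n"
    using bounded[OF one_closed] by blast
  ultimately have "n \<in> N" unfolding N_def by blast
  have "N \<subseteq> {..k}"
  proof
    fix n assume "n \<in> N"
    then obtain y where "y \<in> carrier R" "quot_length R (I <+>\<^bsub>R\<^esub> PIdl y) = enat n"
      unfolding N_def by blast
    then show "n \<in> {..k}" using bounded[of y] by auto
  qed
  then have "finite N" by (rule finite_subset) simp
  with \<open>n \<in> N\<close> have "Max N \<in> N" using Max_in by blast
  then obtain y where y: "y \<in> carrier R" "y \<notin> I" "quot_length R (I <+>\<^bsub>R\<^esub> PIdl y) = enat (Max N)"
    unfolding N_def by blast
  have "a \<otimes> y \<in> I" if a: "a \<in> max_ideal R" for a
  proof (rule ccontr)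
    assume ay: "a \<otimes> y \<notin> I"
    have ac: "a \<in> carrier R" using a max_ideal_subset_carrier[OF loc] by blast
    obtain n where n: "quot_length R (I <+>\<^bsub>R\<^esub> PIdl (a \<otimes> y)) = enat n"
      using bounded[of "a \<otimes> y"] ac y(1) by auto
    then have "n \<in> N" unfolding N_def using ac y(1) ay by auto
    then have "n \<le> Max N" using \<open>finite N\<close> by simp
    moreover obtain n' where "n' < n" "quot_length R (I <+>\<^bsub>R\<^esub> PIdl y) = enat n'"
      using quot_length_psubset_less[OF add_PIdl_ideal[OF I(1)] add_PIdl_ideal[OF I(1) y(1)]
          add_PIdl_mult_psubset[OF loc I(1) a y(1,2)] n] ac y(1) by auto
    ultimately show False using y(3) by simp
  qed
  then show ?thesis using y by blast
qed

text \<open>Adjoining a socle element \<open>y\<close> to \<open>I\<close> raises the colength of the extension by at most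
  \<open>\<l>(B/m\<^sub>AB)\<close>: \<open>(IB : g y) \<supseteq> m\<^sub>AB\<close>.\<close>

lemma quot_length_extension_step:
  assumes A: "local_ring A" and B: "cring B" and g: "g \<in> ring_hom A B"
    and I: "ideal I A" and y: "y \<in> carrier A" and socle: "\<forall>a\<in>max_ideal A. a \<otimes>\<^bsub>A\<^esub> y \<in> I"
  shows "quot_length B (Idl\<^bsub>B\<^esub> (g ` I)) \<le>
    quot_length B (Idl\<^bsub>B\<^esub> (g ` (I <+>\<^bsub>A\<^esub> PIdl\<^bsub>A\<^esub> y))) + quot_length B (Idl\<^bsub>B\<^esub> (g ` max_ideal A))"
proof -
  interpret A: cring A by (rule local_ring_cring[OF A])
  interpret B: cring B by (rule B)
  let ?K = "Idl\<^bsub>B\<^esub> (g ` I)"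
  have gI: "g ` I \<subseteq> carrier B" using ideal_subset_carrier[OF I] ring_hom_closed[OF g] by blast
  have K: "ideal ?K B" by (rule B.genideal_ideal[OF gI])
  have gy: "g y \<in> carrier B" by (rule ring_hom_closed[OF g y])
  have "g ` (I <+>\<^bsub>A\<^esub> PIdl\<^bsub>A\<^esub> y) \<subseteq> ?K <+>\<^bsub>B\<^esub> PIdl\<^bsub>B\<^esub> (g y)"
  proof
    fix z assume "z \<in> g ` (I <+>\<^bsub>A\<^esub> PIdl\<^bsub>A\<^esub> y)"
    then obtain w where w: "w \<in> I <+>\<^bsub>A\<^esub> PIdl\<^bsub>A\<^esub> y" "z = g w" by blast
    then obtain i b where ib: "i \<in> I" "b \<in> carrier A" "z = g (i \<oplus>\<^bsub>A\<^esub> b \<otimes>\<^bsub>A\<^esub> y)"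
      unfolding A.mem_add_PIdl_iff by blast
    have "i \<in> carrier A" using ib(1) ideal_subset_carrier[OF I] by blast
    then have "z = g i \<oplus>\<^bsub>B\<^esub> g b \<otimes>\<^bsub>B\<^esub> g y"
      using ib(2,3) y by (simp add: ring_hom_add[OF g] ring_hom_mult[OF g])
    moreover have "g i \<in> ?K" using ib(1) B.genideal_self[OF gI] by blast
    ultimately show "z \<in> ?K <+>\<^bsub>B\<^esub> PIdl\<^bsub>B\<^esub> (g y)"
      unfolding B.mem_add_PIdl_iff using ring_hom_closed[OF g ib(2)] by blast
  qed
  then have "Idl\<^bsub>B\<^esub> (g ` (I <+>\<^bsub>A\<^esub> PIdl\<^bsub>A\<^esub> y)) \<subseteq> ?K <+>\<^bsub>B\<^esub> PIdl\<^bsub>B\<^esub> (g y)"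
    by (rule B.genideal_minimal[OF B.add_PIdl_ideal[OF K gy]])
  then have le1: "quot_length B (?K <+>\<^bsub>B\<^esub> PIdl\<^bsub>B\<^esub> (g y))
      \<le> quot_length B (Idl\<^bsub>B\<^esub> (g ` (I <+>\<^bsub>A\<^esub> PIdl\<^bsub>A\<^esub> y)))"
    by (rule quot_length_antimono)
  have "g ` max_ideal A \<subseteq> ideal_quotient B ?K (g y)"
  proof
    fix z assume "z \<in> g ` max_ideal A"
    then obtain a where a: "a \<in> max_ideal A" "z = g a" by blast
    have ac: "a \<in> carrier A" using a(1) max_ideal_subset_carrier[OF A] by blast
    have "g a \<otimes>\<^bsub>B\<^esub> g y = g (a \<otimes>\<^bsub>A\<^esub> y)" using ring_hom_mult[OF g ac y] by simp
    moreover have "g (a \<otimes>\<^bsub>A\<^esub> y) \<in> g ` I" using socle a(1) by blast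
    ultimately have "g a \<otimes>\<^bsub>B\<^esub> g y \<in> ?K" using B.genideal_self[OF gI] by auto
    then show "z \<in> ideal_quotient B ?K (g y)"
      unfolding ideal_quotient_def using a(2) ring_hom_closed[OF g ac] by simp
  qed
  then have "Idl\<^bsub>B\<^esub> (g ` max_ideal A) \<subseteq> ideal_quotient B ?K (g y)"
    by (rule B.genideal_minimal[OF B.ideal_quotient_ideal[OF K gy]])
  then have le2: "quot_length B (ideal_quotient B ?K (g y)) \<le> quot_length B (Idl\<^bsub>B\<^esub> (g ` max_ideal A))"
    by (rule quot_length_antimono)
  show ?thesis using B.quot_length_le_split[OF K gy] add_mono[OF le1 le2] by (rule order_trans)
qed

text \<open>Induction on \<open>\<l>(A/I)\<close>, peeling off one socle element at a time.\<close>

lemma quot_length_extension_le: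
  assumes A: "local_ring A" and B: "cring B" and g: "g \<in> ring_hom A B"
  shows "ideal I A \<Longrightarrow> quot_length A I = enat k \<Longrightarrow>
    quot_length B (Idl\<^bsub>B\<^esub> (g ` I)) \<le> enat k * quot_length B (Idl\<^bsub>B\<^esub> (g ` max_ideal A))"
proof (induction k arbitrary: I rule: less_induct)
  case (less k)
  interpret A: cring A by (rule local_ring_cring[OF A])
  interpret B: cring B by (rule B)
  let ?c = "quot_length B (Idl\<^bsub>B\<^esub> (g ` max_ideal A))"
  show ?case
  proof (cases "I = carrier A")
    case True
    have "\<one>\<^bsub>B\<^esub> \<in> g ` I" using True ring_hom_one[OF g] A.one_closed by force
    moreover have "g ` I \<subseteq> carrier B" using True ring_hom_closed[OF g] by blast
    ultimately have "Idl\<^bsub>B\<^esub> (g ` I) = carrier B"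
      using B.genideal_self ideal.one_imp_carrier[OF B.genideal_ideal] by blast
    then show ?thesis using quot_length_carrier[of B] by simp
  next
    case False
    obtain y where y: "y \<in> carrier A" "y \<notin> I" "\<forall>a\<in>max_ideal A. a \<otimes>\<^bsub>A\<^esub> y \<in> I"
      using A.exists_socle_element[OF A less.prems(1) False less.prems(2)] by blast
    let ?I1 = "I <+>\<^bsub>A\<^esub> PIdl\<^bsub>A\<^esub> y"
    have I1: "ideal ?I1 A" by (rule A.add_PIdl_ideal[OF less.prems(1) y(1)])
    have "I \<subset> ?I1" using A.subset_add_PIdl A.mem_add_PIdl less.prems(1) y(1,2) by blast
    then obtain k1 where k1: "k1 < k" "quot_length A ?I1 = enat k1"
      using quot_length_psubset_less[OF less.prems(1) I1 _ less.prems(2)] by blast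
    have "quot_length B (Idl\<^bsub>B\<^esub> (g ` I)) \<le> enat k1 * ?c + ?c"
      using quot_length_extension_step[OF A B g less.prems(1) y(1,3)] less.IH[OF k1(1) I1 k1(2)]
      by (meson add_right_mono order_trans)
    also have "\<dots> = enat (Suc k1) * ?c" by (simp add: eSuc_enat[symmetric] eSuc_plus_1 distrib_right)
    also have "\<dots> \<le> enat k * ?c" using k1(1) by (intro mult_right_mono) simp_all
    finally show ?thesis .
  qed
qed


subsection \<open>Flat local homomorphisms\<close>

lemma (in cring) finsum_lessThan_Suc:
  assumes "\<And>i. i < Suc n \<Longrightarrow> f i \<in> carrier R"
  shows "finsum R f {..<Suc n} = f n \<oplus> finsum R f {..<n}"
proof -
  have "{..<Suc n} = insert n {..<n}" by auto
  then show ?thesis using assms by (simp add: finsum_insert Pi_iff)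
qed

lemma (in cring) finsum_in_ideal:
  assumes I: "ideal I R" and f: "\<And>i. i < (k::nat) \<Longrightarrow> f i \<in> I"
  shows "finsum R f {..<k} \<in> I"
  using f
proof (induction k)
  case 0
  show ?case using I by (simp add: additive_subgroup.zero_closed ideal.axioms(1))
next
  case (Suc k)
  have "\<And>i. i < Suc k \<Longrightarrow> f i \<in> carrier R" using Suc.prems I ideal_subset_carrier by blast
  then have "finsum R f {..<Suc k} = f k \<oplus> finsum R f {..<k}" by (rule finsum_lessThan_Suc)
  then show ?case using Suc I by (simp add: additive_subgroup.a_closed ideal.axioms(1))
qed

definition lin_combs :: "('a, 'm) ring_scheme \<Rightarrow> 'a set \<Rightarrow> 'a set" where
  "lin_combs R W = {z. \<exists>(k::nat) u s. (\<forall>i<k. u i \<in> W \<and> s i \<in> carrier R) \<and>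
     z = finsum R (\<lambda>i. u i \<otimes>\<^bsub>R\<^esub> s i) {..<k}}"

lemma lin_combsI:
  "\<forall>i<(k::nat). u i \<in> W \<and> s i \<in> carrier R \<Longrightarrow> finsum R (\<lambda>i. u i \<otimes>\<^bsub>R\<^esub> s i) {..<k} \<in> lin_combs R W"
  unfolding lin_combs_def by blast

lemma (in cring) lin_combs_subset_carrier:
  assumes W: "W \<subseteq> carrier R" shows "lin_combs R W \<subseteq> carrier R"
proof
  fix z assume "z \<in> lin_combs R W"
  then obtain k :: nat and u s where "\<forall>i<k. u i \<in> W \<and> s i \<in> carrier R"
    "z = finsum R (\<lambda>i. u i \<otimes> s i) {..<k}"
    unfolding lin_combs_def by blast
  then show "z \<in> carrier R" using W by (auto intro!: finsum_closed)
qed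

lemma (in cring) zero_in_lin_combs: "\<zero> \<in> lin_combs R W"
  unfolding lin_combs_def by (rule CollectI, rule exI[of _ 0]) simp

lemma (in cring) lin_combs_add_term:
  assumes W: "W \<subseteq> carrier R" and z: "z \<in> lin_combs R W" and a: "a \<in> W" and b: "b \<in> carrier R"
  shows "z \<oplus> a \<otimes> b \<in> lin_combs R W"
proof -
  obtain k :: nat and u s where us: "\<forall>i<k. u i \<in> W \<and> s i \<in> carrier R"
    "z = finsum R (\<lambda>i. u i \<otimes> s i) {..<k}"
    using z unfolding lin_combs_def by blast
  define u' where "u' = u(k := a)"
  define s' where "s' = s(k := b)"
  have us': "\<forall>i<Suc k. u' i \<in> W \<and> s' i \<in> carrier R" using us a b unfolding u'_def s'_def by auto
  then have "\<And>i. i < Suc k \<Longrightarrow> u' i \<otimes> s' i \<in> carrier R" using W by blast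
  then have "finsum R (\<lambda>i. u' i \<otimes> s' i) {..<Suc k} = a \<otimes> b \<oplus> finsum R (\<lambda>i. u' i \<otimes> s' i) {..<k}"
    by (simp add: finsum_lessThan_Suc u'_def s'_def)
  also have "finsum R (\<lambda>i. u' i \<otimes> s' i) {..<k} = z"
    unfolding us(2) by (rule finsum_cong') (use us(1) W in \<open>auto simp: u'_def s'_def\<close>)
  also have "a \<otimes> b \<oplus> z = z \<oplus> a \<otimes> b"
    using a b W z lin_combs_subset_carrier[OF W] by (auto intro: a_comm)
  finally show ?thesis using lin_combsI[OF us'] by simp
qed

lemma (in cring) lin_combs_add:
  assumes W: "W \<subseteq> carrier R" and z: "z \<in> lin_combs R W" and w: "w \<in> lin_combs R W"
  shows "z \<oplus> w \<in> lin_combs R W"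
proof -
  obtain k :: nat and u s where us: "\<forall>i<k. u i \<in> W \<and> s i \<in> carrier R"
    "w = finsum R (\<lambda>i. u i \<otimes> s i) {..<k}"
    using w unfolding lin_combs_def by blast
  have zc: "z \<in> carrier R" using z lin_combs_subset_carrier[OF W] by blast
  have "j \<le> k \<Longrightarrow> z \<oplus> finsum R (\<lambda>i. u i \<otimes> s i) {..<j} \<in> lin_combs R W" for j
  proof (induction j)
    case 0
    then show ?case using z zc by simp
  next
    case (Suc j)
    have fc: "u i \<otimes> s i \<in> carrier R" if "i < Suc j" for i
    proof -
      have "i < k" using that Suc.prems by simp
      then show ?thesis using us(1) W by blast
    qed
    then have "z \<oplus> finsum R (\<lambda>i. u i \<otimes> s i) {..<Suc j}
        = (z \<oplus> finsum R (\<lambda>i. u i \<otimes> s i) {..<j}) \<oplus> u j \<otimes> s j"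
      using finsum_lessThan_Suc[OF fc] zc by (simp add: a_ac finsum_closed Pi_iff)
    also have "\<dots> \<in> lin_combs R W" by (rule lin_combs_add_term[OF W]) (use Suc us in auto)
    finally show ?case .
  qed
  then show ?thesis using us(2) by blast
qed

lemma (in cring) lin_combs_mult:
  assumes W: "W \<subseteq> carrier R" and z: "z \<in> lin_combs R W" and x: "x \<in> carrier R"
  shows "x \<otimes> z \<in> lin_combs R W"
proof -
  obtain k :: nat and u s where us: "\<forall>i<k. u i \<in> W \<and> s i \<in> carrier R"
    "z = finsum R (\<lambda>i. u i \<otimes> s i) {..<k}"
    using z unfolding lin_combs_def by blast
  have "x \<otimes> z = finsum R (\<lambda>i. x \<otimes> (u i \<otimes> s i)) {..<k}"
    unfolding us(2) by (rule finsum_rdistr) (use us(1) W x in auto)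
  also have "\<dots> = finsum R (\<lambda>i. u i \<otimes> (x \<otimes> s i)) {..<k}"
    by (rule finsum_cong') (use us(1) W x in \<open>auto simp: m_lcomm\<close>)
  finally show ?thesis using lin_combsI[of k u W "\<lambda>i. x \<otimes> s i" R] us x by simp
qed

lemma (in cring) Idl_subset_lin_combs:
  assumes W: "W \<subseteq> carrier R" shows "Idl W \<subseteq> lin_combs R W"
proof (rule genideal_minimal)
  show "ideal (lin_combs R W) R"
    by (rule cring_idealI)
      (use lin_combs_subset_carrier[OF W] zero_in_lin_combs lin_combs_add[OF W] lin_combs_mult[OF W]
        in auto)
  show "W \<subseteq> lin_combs R W"
  proof
    fix x assume x: "x \<in> W"
    from lin_combs_add_term[OF W zero_in_lin_combs x one_closed] show "x \<in> lin_combs R W" using x W by auto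
  qed
qed


lemma relation_of_mem_Idl_image:
  assumes A: "cring A" and B: "cring B" and g: "g \<in> ring_hom A B" and J: "ideal J A"
    and x: "x \<in> carrier A" and gx: "g x \<in> Idl\<^bsub>B\<^esub> (g ` J)"
  obtains k r s where "r k = x" "s k = \<one>\<^bsub>B\<^esub>" "\<forall>i<k. r i \<in> J" "\<forall>i<Suc k. r i \<in> carrier A"
    "\<forall>i<Suc k. s i \<in> carrier B" "finsum B (\<lambda>i. g (r i) \<otimes>\<^bsub>B\<^esub> s i) {..<Suc k} = \<zero>\<^bsub>B\<^esub>"
proof -
  interpret A: cring A by (rule A)
  interpret B: cring B by (rule B)
  have gJ: "g ` J \<subseteq> carrier B" using ideal_subset_carrier[OF J] ring_hom_closed[OF g] by blast
  obtain k :: nat and u t where ut: "\<forall>i<k. u i \<in> g ` J \<and> t i \<in> carrier B"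
    "g x = finsum B (\<lambda>i. u i \<otimes>\<^bsub>B\<^esub> t i) {..<k}"
    using gx B.Idl_subset_lin_combs[OF gJ] unfolding lin_combs_def by blast
  have "\<forall>i. \<exists>r. i < k \<longrightarrow> r \<in> J \<and> u i = g r" using ut(1) by blast
  then obtain r0 where r0: "\<And>i. i < k \<Longrightarrow> r0 i \<in> J \<and> u i = g (r0 i)" by metis
  define r where "r i = (if i < k then r0 i else x)" for i
  define s where "s i = (if i < k then \<ominus>\<^bsub>B\<^esub> t i else \<one>\<^bsub>B\<^esub>)" for i
  have rJ: "\<forall>i<k. r i \<in> J" using r0 unfolding r_def by simp
  have rc: "\<forall>i<Suc k. r i \<in> carrier A"
    using rJ x ideal_subset_carrier[OF J] unfolding r_def by (auto simp: less_Suc_eq)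
  have sc: "\<forall>i<Suc k. s i \<in> carrier B" using ut(1) unfolding s_def by auto
  have uc: "\<And>i. i < k \<Longrightarrow> u i \<in> carrier B" using ut(1) gJ by blast
  have gxc: "g x \<in> carrier B" by (rule ring_hom_closed[OF g x])
  have "finsum B (\<lambda>i. g (r i) \<otimes>\<^bsub>B\<^esub> s i) {..<Suc k}
      = g x \<oplus>\<^bsub>B\<^esub> finsum B (\<lambda>i. g (r i) \<otimes>\<^bsub>B\<^esub> s i) {..<k}"
    using B.finsum_lessThan_Suc[of k "\<lambda>i. g (r i) \<otimes>\<^bsub>B\<^esub> s i"] rc sc ring_hom_closed[OF g]
    unfolding r_def s_def by (simp add: gxc)
  also have "finsum B (\<lambda>i. g (r i) \<otimes>\<^bsub>B\<^esub> s i) {..<k}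
      = finsum B (\<lambda>i. (\<ominus>\<^bsub>B\<^esub> \<one>\<^bsub>B\<^esub>) \<otimes>\<^bsub>B\<^esub> (u i \<otimes>\<^bsub>B\<^esub> t i)) {..<k}"
  proof (rule B.finsum_cong')
    fix i assume "i \<in> {..<k}"
    then have i: "i < k" by simp
    have "g (r i) \<otimes>\<^bsub>B\<^esub> s i = u i \<otimes>\<^bsub>B\<^esub> (\<ominus>\<^bsub>B\<^esub> t i)" unfolding r_def s_def using i r0 by simp
    also have "\<dots> = (\<ominus>\<^bsub>B\<^esub> \<one>\<^bsub>B\<^esub>) \<otimes>\<^bsub>B\<^esub> (u i \<otimes>\<^bsub>B\<^esub> t i)" using uc[OF i] ut(1) i by algebra
    finally show "g (r i) \<otimes>\<^bsub>B\<^esub> s i = (\<ominus>\<^bsub>B\<^esub> \<one>\<^bsub>B\<^esub>) \<otimes>\<^bsub>B\<^esub> (u i \<otimes>\<^bsub>B\<^esub> t i)" .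
  qed (use uc ut(1) in auto)
  also have "\<dots> = (\<ominus>\<^bsub>B\<^esub> \<one>\<^bsub>B\<^esub>) \<otimes>\<^bsub>B\<^esub> g x"
    unfolding ut(2) by (rule B.finsum_rdistr[symmetric]) (use uc ut(1) in auto)
  also have "g x \<oplus>\<^bsub>B\<^esub> (\<ominus>\<^bsub>B\<^esub> \<one>\<^bsub>B\<^esub>) \<otimes>\<^bsub>B\<^esub> g x = \<zero>\<^bsub>B\<^esub>" using gxc by algebra
  finally have "finsum B (\<lambda>i. g (r i) \<otimes>\<^bsub>B\<^esub> s i) {..<Suc k} = \<zero>\<^bsub>B\<^esub>" .
  from that[OF _ _ rJ rc sc this] show thesis by (simp add: r_def s_def)
qed

text \<open>A flat local homomorphism is faithfully flat; here in the form \<open>JB \<inter> A = J\<close>. Flatness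
  splits the relation \<open>g(x) \<cdot> 1 + \<Sum> g(r\<^sub>i) s\<^sub>i = 0\<close>; since \<open>1 \<notin> m\<^sub>B\<close>, one of the coefficients
  of \<open>x\<close> so obtained is a unit.\<close>

lemma flat_local_contraction:
  assumes A: "local_ring A" and B: "local_ring B" and g: "g \<in> ring_hom A B"
    and g_local: "g ` max_ideal A \<subseteq> max_ideal B" and flat: "flat_hom A B g"
    and J: "ideal J A" and x: "x \<in> carrier A" and gx: "g x \<in> Idl\<^bsub>B\<^esub> (g ` J)"
  shows "x \<in> J"
proof -
  interpret A: cring A by (rule local_ring_cring[OF A])
  interpret B: cring B by (rule local_ring_cring[OF B])
  obtain k r s where rel: "r k = x" "s k = \<one>\<^bsub>B\<^esub>" "\<forall>i<k. r i \<in> J" "\<forall>i<Suc k. r i \<in> carrier A"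
    "\<forall>i<Suc k. s i \<in> carrier B" "finsum B (\<lambda>i. g (r i) \<otimes>\<^bsub>B\<^esub> s i) {..<Suc k} = \<zero>\<^bsub>B\<^esub>"
    by (rule relation_of_mem_Idl_image[OF A.is_cring B.is_cring g J x gx])
  have images: "r ` {..<Suc k} \<subseteq> carrier A" "s ` {..<Suc k} \<subseteq> carrier B" using rel(4,5) by auto
  obtain l :: nat and a y where y: "y ` {..<l} \<subseteq> carrier B" and a: "\<forall>i<Suc k. \<forall>j<l. a i j \<in> carrier A"
    and s: "\<forall>i<Suc k. s i = finsum B (\<lambda>j. g (a i j) \<otimes>\<^bsub>B\<^esub> y j) {..<l}"
    and r: "\<forall>j<l. finsum A (\<lambda>i. r i \<otimes>\<^bsub>A\<^esub> a i j) {..<Suc k} = \<zero>\<^bsub>A\<^esub>"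
    using flat unfolding flat_hom_def
    by (elim allE[of _ "Suc k"] allE[of _ r] allE[of _ s]) (use images rel(6) in blast)
  have "\<exists>j<l. a k j \<notin> max_ideal A"
  proof (rule ccontr)
    assume none: "\<not> (\<exists>j<l. a k j \<notin> max_ideal A)"
    have "g (a k j) \<otimes>\<^bsub>B\<^esub> y j \<in> max_ideal B" if j: "j < l" for j
    proof -
      have "g (a k j) \<in> max_ideal B" using none j g_local by blast
      moreover have "y j \<in> carrier B" using y j by blast
      ultimately show ?thesis by (rule ideal.I_r_closed[OF ideal_max_ideal[OF B]])
    qed
    then have "finsum B (\<lambda>j. g (a k j) \<otimes>\<^bsub>B\<^esub> y j) {..<l} \<in> max_ideal B"
      by (rule B.finsum_in_ideal[OF ideal_max_ideal[OF B]])
    moreover have "finsum B (\<lambda>j. g (a k j) \<otimes>\<^bsub>B\<^esub> y j) {..<l} = \<one>\<^bsub>B\<^esub>"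
      using s rel(2) by simp
    ultimately show False using one_notin_max_ideal[OF B] by simp
  qed
  then obtain j where j: "j < l" "a k j \<notin> max_ideal A" by blast
  have akj: "a k j \<in> carrier A" using a j(1) by simp
  have terms: "\<And>i. i < Suc k \<Longrightarrow> r i \<otimes>\<^bsub>A\<^esub> a i j \<in> carrier A" using rel(4) a j(1) by simp
  have rest: "finsum A (\<lambda>i. r i \<otimes>\<^bsub>A\<^esub> a i j) {..<k} \<in> J"
  proof (rule A.finsum_in_ideal[OF J])
    fix i assume "i < k"
    then show "r i \<otimes>\<^bsub>A\<^esub> a i j \<in> J" using rel(3) a j(1) by (intro ideal.I_r_closed[OF J]) simp_all
  qed
  have "\<zero>\<^bsub>A\<^esub> = finsum A (\<lambda>i. r i \<otimes>\<^bsub>A\<^esub> a i j) {..<Suc k}" using r j(1) by simp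
  also have "\<dots> = x \<otimes>\<^bsub>A\<^esub> a k j \<oplus>\<^bsub>A\<^esub> finsum A (\<lambda>i. r i \<otimes>\<^bsub>A\<^esub> a i j) {..<k}"
    unfolding rel(1)[symmetric] by (rule A.finsum_lessThan_Suc[OF terms])
  finally have "x \<otimes>\<^bsub>A\<^esub> a k j = \<ominus>\<^bsub>A\<^esub> finsum A (\<lambda>i. r i \<otimes>\<^bsub>A\<^esub> a i j) {..<k}"
    using A.sum_zero_eq_neg[OF _ ideal.Icarr[OF J rest]] x akj by simp
  also have "\<dots> \<in> J" using rest J by (simp add: additive_subgroup.a_inv_closed ideal.axioms(1))
  finally have "a k j \<otimes>\<^bsub>A\<^esub> x \<in> J" by (simp only: A.m_comm[OF x akj])
  then show "x \<in> J" by (rule A.local_ring_ideal_cancel[OF A J akj j(2) x])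
qed

lemma quot_length_le_flat_extension:
  assumes A: "local_ring A" and B: "local_ring B" and g: "g \<in> ring_hom A B"
    and g_local: "g ` max_ideal A \<subseteq> max_ideal B" and flat: "flat_hom A B g" and I: "ideal I A"
  shows "quot_length A I \<le> quot_length B (Idl\<^bsub>B\<^esub> (g ` I))"
  unfolding quot_length_eq_ideal_length
proof (rule ideal_length_le_of_strict_map[where h = "\<lambda>K. Idl\<^bsub>B\<^esub> (g ` K)"])
  interpret B: cring B by (rule local_ring_cring[OF B])
  fix K assume K: "ideal K A" "I \<subseteq> K" "K \<subseteq> carrier A"
  have gK: "g ` K \<subseteq> carrier B" using K(3) ring_hom_closed[OF g] by blast
  have "ideal (Idl\<^bsub>B\<^esub> (g ` K)) B" by (rule B.genideal_ideal[OF gK])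
  moreover have "Idl\<^bsub>B\<^esub> (g ` I) \<subseteq> Idl\<^bsub>B\<^esub> (g ` K)" using K(2) by (intro B.subset_Idl_subset[OF gK]) blast
  ultimately show "ideal (Idl\<^bsub>B\<^esub> (g ` K)) B \<and> Idl\<^bsub>B\<^esub> (g ` I) \<subseteq> Idl\<^bsub>B\<^esub> (g ` K) \<and>
      Idl\<^bsub>B\<^esub> (g ` K) \<subseteq> carrier B"
    using ideal_subset_carrier by blast
next
  interpret B: cring B by (rule local_ring_cring[OF B])
  fix K K' assume K: "ideal K A" "ideal K' A" "K \<subset> K'"
  have gK': "g ` K' \<subseteq> carrier B" using ideal_subset_carrier[OF K(2)] ring_hom_closed[OF g] by blast
  have sub: "Idl\<^bsub>B\<^esub> (g ` K) \<subseteq> Idl\<^bsub>B\<^esub> (g ` K')" using K(3) by (intro B.subset_Idl_subset[OF gK']) blast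
  obtain x where x: "x \<in> K'" "x \<notin> K" using K(3) by blast
  have "g x \<in> Idl\<^bsub>B\<^esub> (g ` K')" using x(1) B.genideal_self[OF gK'] by blast
  moreover have "g x \<notin> Idl\<^bsub>B\<^esub> (g ` K)"
    using flat_local_contraction[OF A B g g_local flat K(1)] x ideal_subset_carrier[OF K(2)] by blast
  ultimately show "Idl\<^bsub>B\<^esub> (g ` K) \<subset> Idl\<^bsub>B\<^esub> (g ` K')" using sub by blast
qed


subsection \<open>Subadditive sequences\<close>

lemma subadditive_mult_add_le:
  fixes u :: "nat \<Rightarrow> real"
  assumes sub: "\<And>n p. u (n + p) \<le> u n + u p"
  shows "u (q * k + r) \<le> real q * u k + u r"
proof (induction q)
  case (Suc q)
  have "u (Suc q * k + r) = u (k + (q * k + r))" by (simp add: add.assoc)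
  also have "\<dots> \<le> u k + u (q * k + r)" by (rule sub)
  also have "\<dots> \<le> u k + (real q * u k + u r)" using Suc.IH by simp
  finally show ?case by (simp add: algebra_simps)
qed simp

text \<open>Fekete's lemma; the limit is \<open>inf\<^sub>k u k / k\<close>.\<close>

lemma fekete_convergent:
  fixes u :: "nat \<Rightarrow> real"
  assumes nonneg: "\<And>n. 0 \<le> u n" and sub: "\<And>n p. u (n + p) \<le> u n + u p"
  shows "convergent (\<lambda>n. u n / real n)"
proof -
  define L where "L = (INF k\<in>{1..}. u k / real k)"
  have bdd: "bdd_below ((\<lambda>k. u k / real k) ` {1..})" using nonneg by (intro bdd_belowI[of _ 0]) auto
  have low: "L \<le> u n / real n" if "1 \<le> n" for n
    unfolding L_def by (rule cINF_lower[OF bdd]) (use that in simp)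
  have "(\<lambda>n. u n / real n) \<longlonglongrightarrow> L"
  proof (rule LIMSEQ_I)
    fix e :: real assume e: "0 < e"
    obtain k where k: "1 \<le> k" "u k / real k < L + e / 2"
      using cINF_less_iff[OF _ bdd, of "L + e / 2"] e unfolding L_def by auto
    define M where "M = Max (u ` {..<k})"
    have M: "r < k \<Longrightarrow> u r \<le> M" for r unfolding M_def by (rule Max_ge) auto
    obtain N :: nat where N: "real N > 2 * M / e" using reals_Archimedean2 by blast
    have "norm (u n / real n - L) < e" if n: "max 1 (Suc N) \<le> n" for n
    proof -
      have npos: "0 < real n" and nN: "real n > 2 * M / e" using n N by auto
      define q where "q = n div k"
      define r where "r = n mod k"
      have nqr: "n = q * k + r" unfolding q_def r_def by simp
      have "r < k" unfolding r_def using k by simp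
      have "u n \<le> real q * u k + M"
        using subadditive_mult_add_le[OF sub, of q k r] M[OF \<open>r < k\<close>] unfolding nqr by simp
      also have "real q * u k = (real q * real k) * (u k / real k)" using k by simp
      also have "\<dots> \<le> real n * (u k / real k)"
        unfolding nqr using nonneg k by (intro mult_right_mono) simp_all
      finally have "u n / real n \<le> u k / real k + M / real n" using npos by (simp add: field_simps)
      moreover have "M / real n < e / 2" using nN e npos by (simp add: field_simps)
      ultimately have "u n / real n < L + e" using k(2) by linarith
      then show ?thesis using low[of n] n by simp
    qed
    then show "\<exists>no. \<forall>n\<ge>no. norm (u n / real n - L) < e" by blast
  qed
  then show ?thesis unfolding convergent_def by blast
qed

lemma lim_div_eq_of_bounded_diff:
  fixes a b :: "nat \<Rightarrow> real"
  assumes conv: "convergent (\<lambda>n. a n / real n)" and bounded: "\<And>n. \<bar>a n - b n\<bar> \<le> C"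
  shows "lim (\<lambda>n. a n / real n) = lim (\<lambda>n. b n / real n)"
proof -
  obtain L where L: "(\<lambda>n. a n / real n) \<longlonglongrightarrow> L" using conv unfolding convergent_def by blast
  have bd: "\<bar>b n / real n - a n / real n\<bar> \<le> C / real n" for n
  proof (cases "n = 0")
    case False
    then have "\<bar>b n / real n - a n / real n\<bar> = \<bar>b n - a n\<bar> / real n"
      by (simp add: diff_divide_distrib[symmetric])
    also have "\<dots> \<le> C / real n" using bounded[of n] by (simp add: abs_minus_commute divide_right_mono)
    finally show ?thesis .
  qed (use bounded[of 0] in simp)
  have "(\<lambda>n. b n / real n - a n / real n) \<longlonglongrightarrow> 0"
  proof (rule tendsto_sandwich)
    show "(\<lambda>n. - (C / real n)) \<longlonglongrightarrow> 0" "(\<lambda>n. C / real n) \<longlonglongrightarrow> 0"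
      using tendsto_minus[OF lim_const_over_n[of C]] lim_const_over_n[of C] by simp_all
    have "- (C / real n) \<le> b n / real n - a n / real n" "b n / real n - a n / real n \<le> C / real n"
      for n using bd[of n] unfolding abs_le_iff by linarith+
    then show "\<forall>\<^sub>F n in sequentially. - (C / real n) \<le> b n / real n - a n / real n"
      "\<forall>\<^sub>F n in sequentially. b n / real n - a n / real n \<le> C / real n"
      by (simp_all add: always_eventually)
  qed
  from tendsto_add[OF this L] have "(\<lambda>n. b n / real n) \<longlonglongrightarrow> L" by simp
  then show ?thesis using L by (simp add: limI)
qed

lemma lim_ln_div_eq_of_mutual_bounds:
  fixes a b :: "nat \<Rightarrow> nat"
  assumes a1: "\<And>n. 1 \<le> a n" and b1: "\<And>n. 1 \<le> b n" and sub: "\<And>n p. a (n + p) \<le> a n * a p"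
    and ba: "\<And>n. b n \<le> c * a n" and ab: "\<And>n. a n \<le> c * b n"
  shows "lim (\<lambda>n. ln (real (a n)) / real n) = lim (\<lambda>n. ln (real (b n)) / real n)"
proof (rule lim_div_eq_of_bounded_diff)
  have ln_mult_le: "ln (real x) \<le> ln (real y) + ln (real z)" if "x \<le> y * z" "1 \<le> x" "1 \<le> y" "1 \<le> z"
    for x y z :: nat
  proof -
    have "real x \<le> real y * real z" using that(1) by (simp flip: of_nat_mult)
    then have "ln (real x) \<le> ln (real y * real z)" using that(2) by simp
    then show ?thesis using that(3,4) by (simp add: ln_mult)
  qed
  show "convergent (\<lambda>n. ln (real (a n)) / real n)"
    using a1 ln_mult_le[OF sub a1 a1 a1] by (intro fekete_convergent) simp_all
  have "1 \<le> c" using ab[of 0] a1[of 0] by (cases c) auto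
  show "\<bar>ln (real (a n)) - ln (real (b n))\<bar> \<le> ln (real c)" for n
    using ln_mult_le[OF ba[of n] b1[of n] \<open>1 \<le> c\<close> a1[of n]]
      ln_mult_le[OF ab[of n] a1[of n] \<open>1 \<le> c\<close> b1[of n]]
    by (simp add: mult.commute abs_le_iff)
qed


subsection \<open>Iterated self-maps\<close>

lemma funpow_ring_hom: "\<chi> \<in> ring_hom T T \<Longrightarrow> \<chi> ^^ n \<in> ring_hom T T"
proof (induction n)
  case 0
  then show ?case using id_ring_hom[of T] by (simp add: id_def)
next
  case (Suc n)
  then show ?case using ring_hom_trans[of "\<chi> ^^ n" T T \<chi> T] by (simp add: comp_def)
qed

lemma funpow_image_subset: "\<chi> ` M \<subseteq> M \<Longrightarrow> (\<chi> ^^ n) ` M \<subseteq> M"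
proof (induction n)
  case (Suc n)
  have "(\<chi> ^^ Suc n) ` M = \<chi> ` (\<chi> ^^ n) ` M" by (simp add: image_comp)
  also have "\<dots> \<subseteq> M" using Suc by blast
  finally show ?case .
qed simp

lemma funpow_intertwine:
  assumes comm: "\<forall>x\<in>A. \<psi> (f x) = f (\<phi> x)" and closed: "\<phi> ` A \<subseteq> A"
  shows "x \<in> A \<Longrightarrow> (\<psi> ^^ n) (f x) = f ((\<phi> ^^ n) x)"
proof (induction n arbitrary: x)
  case (Suc n)
  have "(\<psi> ^^ Suc n) (f x) = (\<psi> ^^ n) (\<psi> (f x))" by (simp only: funpow_Suc_right comp_apply)
  also have "\<dots> = (\<psi> ^^ n) (f (\<phi> x))" using comm Suc.prems by simp
  also have "\<dots> = f ((\<phi> ^^ n) (\<phi> x))" using Suc closed by blast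
  also have "\<dots> = f ((\<phi> ^^ Suc n) x)" by (simp only: funpow_Suc_right comp_apply)
  finally show ?case .
qed simp

lemma one_le_hom_length:
  assumes nl: "noeth_local_ring B" and g: "finite_length_hom A B g"
  shows "1 \<le> hom_length A B g"
proof -
  have loc: "local_ring B" by (rule noeth_local_ring_local[OF nl])
  interpret B: cring B by (rule local_ring_cring[OF loc])
  have g_local: "g ` max_ideal A \<subseteq> max_ideal B" using g unfolding finite_length_hom_def by blast
  then have "g ` max_ideal A \<subseteq> carrier B" using max_ideal_subset_carrier[OF loc] by blast
  moreover have "Idl\<^bsub>B\<^esub> (g ` max_ideal A) \<subseteq> max_ideal B"
    by (rule B.genideal_minimal[OF ideal_max_ideal[OF loc] g_local])
  ultimately have "1 \<le> quot_length B (Idl\<^bsub>B\<^esub> (g ` max_ideal A))"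
    using B.one_le_quot_length[OF B.genideal_ideal] max_ideal_ne_carrier[OF loc]
      max_ideal_subset_carrier[OF loc] by blast
  then show ?thesis using quot_length_eq_hom_length[OF nl g] by (simp add: one_enat_def)
qed

text \<open>The ideal \<open>\<chi>\<^sup>p\<^sup>+\<^sup>n(m)T\<close> is the extension of \<open>\<chi>\<^sup>n(m)T\<close> along \<open>\<chi>\<^sup>p\<close>.\<close>

lemma quot_length_funpow_add_le:
  assumes loc: "local_ring T" and \<chi>: "\<chi> \<in> ring_hom T T" and \<chi>_local: "\<chi> ` max_ideal T \<subseteq> max_ideal T"
    and fin: "quot_length T (Idl\<^bsub>T\<^esub> ((\<chi> ^^ n) ` max_ideal T)) = enat k"
  shows "quot_length T (Idl\<^bsub>T\<^esub> ((\<chi> ^^ (p + n)) ` max_ideal T))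
    \<le> enat k * quot_length T (Idl\<^bsub>T\<^esub> ((\<chi> ^^ p) ` max_ideal T))"
proof -
  interpret T: cring T by (rule local_ring_cring[OF loc])
  have W: "(\<chi> ^^ n) ` max_ideal T \<subseteq> carrier T"
    using funpow_image_subset[OF \<chi>_local] max_ideal_subset_carrier[OF loc] by blast
  have "Idl\<^bsub>T\<^esub> ((\<chi> ^^ p) ` (Idl\<^bsub>T\<^esub> ((\<chi> ^^ n) ` max_ideal T))) = Idl\<^bsub>T\<^esub> ((\<chi> ^^ (p + n)) ` max_ideal T)"
    using Idl_image_Idl[OF T.is_cring T.is_cring funpow_ring_hom[OF \<chi>] W]
    by (simp add: image_comp funpow_add)
  then show ?thesis
    using quot_length_extension_le[OF loc T.is_cring funpow_ring_hom[OF \<chi>, of p] T.genideal_ideal[OF W] fin]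
    by simp
qed

lemma finite_length_selfmap_funpow:
  assumes nl: "noeth_local_ring T" and \<chi>: "finite_length_selfmap T \<chi>"
  shows "finite_length_selfmap T (\<chi> ^^ n)"
proof -
  have loc: "local_ring T" by (rule noeth_local_ring_local[OF nl])
  interpret T: cring T by (rule local_ring_cring[OF loc])
  have hom: "\<chi> \<in> ring_hom T T" and \<chi>_local: "\<chi> ` max_ideal T \<subseteq> max_ideal T"
    using \<chi> unfolding finite_length_selfmap_def finite_length_hom_def by auto
  have "quot_length T (Idl\<^bsub>T\<^esub> ((\<chi> ^^ n) ` max_ideal T)) \<noteq> \<infinity>"
  proof (induction n)
    case 0
    have "max_ideal T \<subseteq> Idl\<^bsub>T\<^esub> ((\<chi> ^^ 0) ` max_ideal T)"
      using T.genideal_self[OF max_ideal_subset_carrier[OF loc]] by simp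
    then have "quot_length T (Idl\<^bsub>T\<^esub> ((\<chi> ^^ 0) ` max_ideal T)) \<le> 1"
      using T.quot_length_le_1_of_max_ideal_subset[OF loc T.genideal_ideal]
        max_ideal_subset_carrier[OF loc] by simp
    then show ?case by (metis infinity_ileE one_enat_def)
  next
    case (Suc n)
    then obtain k where k: "quot_length T (Idl\<^bsub>T\<^esub> ((\<chi> ^^ n) ` max_ideal T)) = enat k" by auto
    have "quot_length T (Idl\<^bsub>T\<^esub> ((\<chi> ^^ (1 + n)) ` max_ideal T))
        \<le> enat k * quot_length T (Idl\<^bsub>T\<^esub> ((\<chi> ^^ 1) ` max_ideal T))"
      by (rule quot_length_funpow_add_le[OF loc hom \<chi>_local k])
    also have "\<dots> = enat (k * hom_length T T \<chi>)"
      using quot_length_eq_hom_length[OF nl, of T \<chi>] \<chi> unfolding finite_length_selfmap_def by simp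
    finally show ?case by (metis infinity_ileE plus_1_eq_Suc)
  qed
  then show ?thesis unfolding finite_length_selfmap_def
    by (simp add: finite_length_hom_iff[OF nl funpow_ring_hom[OF hom] funpow_image_subset[OF \<chi>_local]])
qed

lemma hom_length_funpow_add_le:
  assumes nl: "noeth_local_ring T" and \<chi>: "finite_length_selfmap T \<chi>"
  shows "hom_length T T (\<chi> ^^ (p + n)) \<le> hom_length T T (\<chi> ^^ n) * hom_length T T (\<chi> ^^ p)"
proof -
  have hom: "\<chi> \<in> ring_hom T T" and \<chi>_local: "\<chi> ` max_ideal T \<subseteq> max_ideal T"
    using \<chi> unfolding finite_length_selfmap_def finite_length_hom_def by auto
  have len: "quot_length T (Idl\<^bsub>T\<^esub> ((\<chi> ^^ m) ` max_ideal T)) = enat (hom_length T T (\<chi> ^^ m))" for m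
    by (rule quot_length_eq_hom_length[OF nl
          finite_length_selfmap_funpow[OF nl \<chi>, unfolded finite_length_selfmap_def]])
  show ?thesis
    using quot_length_funpow_add_le[OF noeth_local_ring_local[OF nl] hom \<chi>_local len[of n], of p]
    unfolding len by simp
qed


subsection \<open>Equivariant flat homomorphisms\<close>

locale equivariant_flat_hom =
  fixes R :: "('a, 'm) ring_scheme" and S :: "('b, 'n) ring_scheme"
    and f :: "'a \<Rightarrow> 'b" and \<phi> :: "'a \<Rightarrow> 'a" and \<psi> :: "'b \<Rightarrow> 'b"
  assumes noeth_R: "noeth_local_ring R" and noeth_S: "noeth_local_ring S"
    and f_finite: "finite_length_hom R S f" and f_flat: "flat_hom R S f"
    and \<phi>_finite: "finite_length_selfmap R \<phi>"
    and \<psi>_hom: "\<psi> \<in> ring_hom S S"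
    and equivariant: "\<forall>x\<in>carrier R. \<psi> (f x) = f (\<phi> x)"
begin

lemma local_R: "local_ring R" and local_S: "local_ring S"
  using noeth_local_ring_local noeth_R noeth_S by blast+

sublocale R: cring R by (rule local_ring_cring[OF local_R])
sublocale S: cring S by (rule local_ring_cring[OF local_S])

lemma f_hom: "f \<in> ring_hom R S" and f_local: "f ` max_ideal R \<subseteq> max_ideal S"
  using f_finite unfolding finite_length_hom_def by auto

lemma \<phi>_hom: "\<phi> \<in> ring_hom R R" and \<phi>_local: "\<phi> ` max_ideal R \<subseteq> max_ideal R"
  using \<phi>_finite unfolding finite_length_selfmap_def finite_length_hom_def by auto

lemma f_max_ideal_subset: "f ` max_ideal R \<subseteq> carrier S"
  using f_local max_ideal_subset_carrier[OF local_S] by blast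

lemma extension_funpow_eq:
  "Idl\<^bsub>S\<^esub> ((\<psi> ^^ n) ` (Idl\<^bsub>S\<^esub> (f ` max_ideal R))) = Idl\<^bsub>S\<^esub> (f ` (Idl\<^bsub>R\<^esub> ((\<phi> ^^ n) ` max_ideal R)))"
proof -
  have m: "max_ideal R \<subseteq> carrier R" by (rule max_ideal_subset_carrier[OF local_R])
  have "(\<psi> ^^ n) ` f ` max_ideal R = f ` (\<phi> ^^ n) ` max_ideal R"
    using funpow_intertwine[OF equivariant] ring_hom_closed[OF \<phi>_hom] m
    unfolding image_comp by (intro image_cong) auto
  moreover have "(\<phi> ^^ n) ` max_ideal R \<subseteq> carrier R"
    using funpow_image_subset[OF \<phi>_local] m by blast
  ultimately show ?thesis
    using Idl_image_Idl[OF S.is_cring S.is_cring funpow_ring_hom[OF \<psi>_hom] f_max_ideal_subset]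
      Idl_image_Idl[OF R.is_cring S.is_cring f_hom] by simp
qed

text \<open>Since \<open>f(m\<^sub>R)S\<close> is \<open>m\<^sub>S\<close>-primary, locality of \<open>\<psi>\<close> follows from
  \<open>\<psi>(f(m\<^sub>R)S) \<subseteq> f(\<phi>(m\<^sub>R))S \<subseteq> m\<^sub>S\<close>.\<close>

lemma \<psi>_local: "\<psi> ` max_ideal S \<subseteq> max_ideal S"
proof
  fix z assume "z \<in> \<psi> ` max_ideal S"
  then obtain x where x: "x \<in> max_ideal S" "z = \<psi> x" by blast
  have xc: "x \<in> carrier S" using x(1) max_ideal_subset_carrier[OF local_S] by blast
  let ?Q = "Idl\<^bsub>S\<^esub> (f ` max_ideal R)"
  obtain e :: nat where e: "x [^]\<^bsub>S\<^esub> e \<in> ?Q"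
    using f_finite x(1) unfolding finite_length_hom_def is_primary_for_def radical_ideal_def by blast
  have "\<psi> (x [^]\<^bsub>S\<^esub> e) \<in> Idl\<^bsub>S\<^esub> (\<psi> ` ?Q)"
    using e S.genideal_self ring_hom_closed[OF \<psi>_hom] ideal_subset_carrier[OF S.genideal_ideal[OF f_max_ideal_subset]]
    by (metis image_eqI image_subset_iff subsetD)
  also have "Idl\<^bsub>S\<^esub> (\<psi> ` ?Q) = Idl\<^bsub>S\<^esub> (f ` (Idl\<^bsub>R\<^esub> (\<phi> ` max_ideal R)))"
    using extension_funpow_eq[of 1] by simp
  also have "\<dots> \<subseteq> ?Q"
  proof (rule S.subset_Idl_subset)
    have "Idl\<^bsub>R\<^esub> (\<phi> ` max_ideal R) \<subseteq> max_ideal R"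
      by (rule R.genideal_minimal[OF ideal_max_ideal[OF local_R] \<phi>_local])
    then show "f ` (Idl\<^bsub>R\<^esub> (\<phi> ` max_ideal R)) \<subseteq> f ` max_ideal R" by blast
  qed (rule f_max_ideal_subset)
  also have "?Q \<subseteq> max_ideal S" by (rule S.genideal_minimal[OF ideal_max_ideal[OF local_S] f_local])
  finally have "\<psi> x [^]\<^bsub>S\<^esub> e \<in> max_ideal S"
    using ring_hom_ring.hom_nat_pow[OF ring_hom_ringI2[OF S.ring_axioms S.ring_axioms \<psi>_hom] xc] by simp
  then show "z \<in> max_ideal S"
    using S.mem_primeideal_of_pow_mem[OF S.maximalideal_prime[OF maximalideal_max_ideal[OF local_S]]]
      ring_hom_closed[OF \<psi>_hom xc] x(2) by blast
qed

lemma quot_length_funpow_le: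
  "quot_length S (Idl\<^bsub>S\<^esub> ((\<psi> ^^ n) ` max_ideal S)) \<le> enat (hom_length R R (\<phi> ^^ n) * hom_length R S f)"
proof -
  have "(\<psi> ^^ n) ` max_ideal S \<subseteq> carrier S"
    using funpow_image_subset[OF \<psi>_local] max_ideal_subset_carrier[OF local_S] by blast
  moreover have "(\<psi> ^^ n) ` (Idl\<^bsub>S\<^esub> (f ` max_ideal R)) \<subseteq> (\<psi> ^^ n) ` max_ideal S"
    using S.genideal_minimal[OF ideal_max_ideal[OF local_S] f_local] by blast
  ultimately have "quot_length S (Idl\<^bsub>S\<^esub> ((\<psi> ^^ n) ` max_ideal S))
      \<le> quot_length S (Idl\<^bsub>S\<^esub> (f ` (Idl\<^bsub>R\<^esub> ((\<phi> ^^ n) ` max_ideal R))))"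
    unfolding extension_funpow_eq[symmetric] by (intro quot_length_antimono S.subset_Idl_subset)
  also have "\<dots> \<le> enat (hom_length R R (\<phi> ^^ n)) * quot_length S (Idl\<^bsub>S\<^esub> (f ` max_ideal R))"
    using quot_length_extension_le[OF local_R S.is_cring f_hom R.genideal_ideal
        quot_length_eq_hom_length[OF noeth_R finite_length_selfmap_funpow[OF noeth_R \<phi>_finite,
          unfolded finite_length_selfmap_def]]]
      funpow_image_subset[OF \<phi>_local] max_ideal_subset_carrier[OF local_R] by blast
  also have "\<dots> = enat (hom_length R R (\<phi> ^^ n) * hom_length R S f)"
    using quot_length_eq_hom_length[OF noeth_S f_finite] by simp
  finally show ?thesis .
qed

lemma \<psi>_finite: "finite_length_selfmap S \<psi>"
proof -
  have "quot_length S (Idl\<^bsub>S\<^esub> (\<psi> ` max_ideal S)) \<le> enat (hom_length R R \<phi> * hom_length R S f)"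
    using quot_length_funpow_le[of 1] by simp
  then show ?thesis unfolding finite_length_selfmap_def finite_length_hom_iff[OF noeth_S \<psi>_hom \<psi>_local]
    by (metis infinity_ileE)
qed

lemma hom_length_le: "hom_length R R (\<phi> ^^ n) \<le> hom_length R S f * hom_length S S (\<psi> ^^ n)"
proof -
  have W: "(\<phi> ^^ n) ` max_ideal R \<subseteq> carrier R"
    using funpow_image_subset[OF \<phi>_local] max_ideal_subset_carrier[OF local_R] by blast
  have "enat (hom_length R R (\<phi> ^^ n)) = quot_length R (Idl\<^bsub>R\<^esub> ((\<phi> ^^ n) ` max_ideal R))"
    using quot_length_eq_hom_length[OF noeth_R finite_length_selfmap_funpow[OF noeth_R \<phi>_finite,
        unfolded finite_length_selfmap_def]] by simp
  also have "\<dots> \<le> quot_length S (Idl\<^bsub>S\<^esub> (f ` (Idl\<^bsub>R\<^esub> ((\<phi> ^^ n) ` max_ideal R))))"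
    by (rule quot_length_le_flat_extension[OF local_R local_S f_hom f_local f_flat R.genideal_ideal[OF W]])
  also have "\<dots> \<le> enat (hom_length R S f) * quot_length S (Idl\<^bsub>S\<^esub> ((\<psi> ^^ n) ` max_ideal S))"
    unfolding extension_funpow_eq[symmetric]
    by (rule quot_length_extension_le[OF local_S S.is_cring funpow_ring_hom[OF \<psi>_hom]
          S.genideal_ideal[OF f_max_ideal_subset] quot_length_eq_hom_length[OF noeth_S f_finite]])
  also have "\<dots> = enat (hom_length R S f * hom_length S S (\<psi> ^^ n))"
    using quot_length_eq_hom_length[OF noeth_S finite_length_selfmap_funpow[OF noeth_S \<psi>_finite,
        unfolded finite_length_selfmap_def]] by simp
  finally show ?thesis by simp
qed

lemma alg_entropy_eq: "alg_entropy R \<phi> = alg_entropy S \<psi>"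
  unfolding alg_entropy_def
proof (rule lim_ln_div_eq_of_mutual_bounds)
  show "1 \<le> hom_length R R (\<phi> ^^ n)" "1 \<le> hom_length S S (\<psi> ^^ n)" for n
    using one_le_hom_length noeth_R noeth_S finite_length_selfmap_funpow[OF noeth_R \<phi>_finite]
      finite_length_selfmap_funpow[OF noeth_S \<psi>_finite] unfolding finite_length_selfmap_def by blast+
  show "hom_length R R (\<phi> ^^ (n + p)) \<le> hom_length R R (\<phi> ^^ n) * hom_length R R (\<phi> ^^ p)" for n p
    using hom_length_funpow_add_le[OF noeth_R \<phi>_finite, of p n] by (simp add: add.commute mult.commute)
  show "hom_length S S (\<psi> ^^ n) \<le> hom_length R S f * hom_length R R (\<phi> ^^ n)" for n
    using quot_length_funpow_le[of n]
      quot_length_eq_hom_length[OF noeth_S finite_length_selfmap_funpow[OF noeth_S \<psi>_finite,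
        unfolded finite_length_selfmap_def]]
    by (simp add: mult.commute)
  show "hom_length R R (\<phi> ^^ n) \<le> hom_length R S f * hom_length S S (\<psi> ^^ n)" for n
    by (rule hom_length_le)
qed

end

theorem mainTheorem7:
  fixes R :: "('a, 'm) ring_scheme" and S :: "('b, 'n) ring_scheme"
    and f :: "'a \<Rightarrow> 'b" and \<phi> :: "'a \<Rightarrow> 'a" and \<psi> :: "'b \<Rightarrow> 'b"
  assumes "noeth_local_ring R" and "noeth_local_ring S"
    and "finite_length_hom R S f" and "flat_hom R S f"
    and "finite_length_selfmap R \<phi>"
    and "\<psi> \<in> ring_hom S S"
    and "\<forall>x\<in>carrier R. \<psi> (f x) = f (\<phi> x)"
  shows "finite_length_selfmap S \<psi> \<and> alg_entropy R \<phi> = alg_entropy S \<psi>"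
proof -
  interpret equivariant_flat_hom R S f \<phi> \<psi> by unfold_locales (fact assms)+
  show ?thesis using \<psi>_finite alg_entropy_eq by blast
qed

end
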